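(* Let $G$ be a finite undirected graph and $u\in V(G)$ such that all vertices in $N(u)$ are pairwise adjacent. Then \[\mathrm{Ind}(G)\simeq\bigvee_{v\in N(u)}\mathrm{susp}\,\mathrm{Ind}(G\setminus(N(u)\cup N(v))).\] Moreover, suppose that for each $v\in N(u)$ with $G\setminus(N(u)\cup N(v))\neq\emptyset$, $\mathcal{G}_v$ is a set of generating faces of $\mathrm{Ind}(G\setminus(N(u)\cup N(v)))$. Then the union of \[\bigcup_{v\in N(u),\ G\setminus(N(u)\cup N(v))=\emptyset}\{\{v\}\}\quad\text{and}\quad\bigcup_{v\in N(u),\ G\setminus(N(u)\cup N(v))\neq\emptyset}\{\{v\}\cup\sigma\mid\sigma\in\mathcal{G}_v\}\] is a set of generating faces of $\mathrm{Ind}(G)$.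
   Context: $N(v)$ is the set of vertices adjacent to $v$. $\mathrm{Ind}(H)$ is the simplicial complex with vertex set $V(H)$ whose simplices are the independent sets of $H$; $H\setminus W$ is the induced subgraph on $V(H)\setminus W$; for the empty graph, $\mathrm{Ind}$ is the empty complex. Conventions: $\mathrm{susp}(\emptyset)=S^0$ and a wedge over an empty index set is a point. A set $\mathcal{G}$ of maximal faces of a simplicial complex $\Delta$ is a set of generating faces if the complex $\Delta\setminus\mathcal{G}$ obtained by removing the faces in $\mathcal{G}$ (i.e. removing their interiors) is contractible. *)

theory Defs
  imports "HOL-Analysis.Analysis"
begin

text \<open>Abstract simplicial complexes are represented as sets of (finite) vertex sets.\<close>

definition realization :: "'v set set \<Rightarrow> ('v \<Rightarrow> real) set" where
  "realization K = {f. (\<exists>\<sigma>\<in>K. finite \<sigma> \<and> {x. f x \<noteq> 0} \<subseteq> \<sigma>) \<and> (\<forall>x. 0 \<le> f x)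
                       \<and> sum f {x. f x \<noteq> 0} = 1}"

definition geom :: "'v set set \<Rightarrow> ('v \<Rightarrow> real) topology" where
  "geom K = top_of_set (realization K)"

definition contractible_cx :: "'v set set \<Rightarrow> bool" where
  "contractible_cx K \<longleftrightarrow> realization K \<noteq> {} \<and> contractible_space (geom K)"

definition maximal_faces :: "'v set set \<Rightarrow> 'v set set" where
  "maximal_faces K = {\<sigma>\<in>K. \<forall>\<tau>\<in>K. \<sigma> \<subseteq> \<tau> \<longrightarrow> \<tau> = \<sigma>}"

text \<open>Removing (the interiors of) a set of maximal faces leaves the subcomplex K - GF.\<close>
definition generating_faces :: "'v set set \<Rightarrow> 'v set set \<Rightarrow> bool" where
  "generating_faces K GF \<longleftrightarrow> GF \<subseteq> maximal_faces K \<and> contractible_cx (K - GF)"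

definition susp_cx :: "'v set set \<Rightarrow> ('v + bool) set set" where
  "susp_cx K = {Inl ` \<sigma> \<union> T | \<sigma> T. \<sigma> \<in> K \<and> T \<in> {{}, {Inr True}, {Inr False}}}"

text \<open>Simplicial wedge of complexes K i (i in I), glued at base vertices b i;
  the common base point is None.  Over an empty index set this is a point.\<close>
definition wedge_cx :: "'i set \<Rightarrow> ('i \<Rightarrow> 'w set set) \<Rightarrow> ('i \<Rightarrow> 'w) \<Rightarrow> ('i \<times> 'w) option set set" where
  "wedge_cx I K b = {{}, {None}} \<union>
     (\<Union>i\<in>I. (\<lambda>\<sigma>. (\<lambda>x. if x = b i then None else Some (i, x)) ` \<sigma>) ` K i)"

text \<open>Graphs: finite vertex set V with a symmetric irreflexive adjacency relation E
  (only its restriction to V matters).  Induced subgraphs G \ W are (V - W, E).\<close>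
definition nbhd :: "'a set \<Rightarrow> ('a \<Rightarrow> 'a \<Rightarrow> bool) \<Rightarrow> 'a \<Rightarrow> 'a set" where
  "nbhd V E v = {w\<in>V. E v w}"

definition Ind :: "'a set \<Rightarrow> ('a \<Rightarrow> 'a \<Rightarrow> bool) \<Rightarrow> 'a set set" where
  "Ind V E = {\<sigma>. \<sigma> \<subseteq> V \<and> (\<forall>x\<in>\<sigma>. \<forall>y\<in>\<sigma>. \<not> E x y)}"

end

theory Submission
  imports Defs
begin

text \<open>Write \<open>N = N(u)\<close> and \<open>L\<^sub>v = Ind(G \ (N \<union> N(v)))\<close> for \<open>v \<in> N\<close>.  Since \<open>N\<close> is a
  clique, every face of \<open>Ind G\<close> either misses \<open>N\<close>, and then remains a face after adding \<open>u\<close>, or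
  is \<open>{v} \<union> \<tau>\<close> for a unique \<open>v \<in> N\<close> and \<open>\<tau> \<in> L\<^sub>v\<close>.  A point of \<open>{v} \<union> \<tau>\<close> with weight
  \<open>t\<close> at \<open>v\<close> is sent to the cone from the base point over \<open>\<tau>\<close> in the \<open>v\<close>-th suspension when
  \<open>t \<le> 1/2\<close> and to the cone from the other pole when \<open>t \<ge> 1/2\<close>; faces missing \<open>N\<close> collapse
  to the base point.  The simplicial map back sends the base point to \<open>u\<close> and the other pole of
  the \<open>v\<close>-th suspension to \<open>v\<close>, and both composites are joined to the identity by
  straight-line homotopies through an intermediate deformation.

  Removing the listed faces leaves the faces missing \<open>N\<close> and the cones from \<open>v\<close> over the
  contractible complexes \<open>L\<^sub>v - G\<^sub>v\<close> (nothing when \<open>L\<^sub>v\<close> has no vertices).  On such a cone, a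
  point with weight \<open>t \<le> 1/2\<close> at \<open>v\<close> has its projection to \<open>L\<^sub>v - G\<^sub>v\<close> moved along the
  contraction for time \<open>2t\<close>; this fixes the faces missing \<open>N\<close> and ends, up to a straight line,
  inside \<open>L\<^sub>v - G\<^sub>v\<close>, whose faces together with those missing \<open>N\<close> all lie in the cone with
  apex \<open>u\<close>.\<close>

section \<open>Geometric simplices\<close>

definition geom_simplex :: "'v set \<Rightarrow> ('v \<Rightarrow> real) set" where
  "geom_simplex \<sigma> = {f. (\<forall>x. 0 \<le> f x) \<and> (\<forall>x. x \<notin> \<sigma> \<longrightarrow> f x = 0) \<and> sum f \<sigma> = 1}"

lemma geom_simplexI:
  assumes "\<And>x. 0 \<le> f x" "\<And>x. x \<notin> \<sigma> \<Longrightarrow> f x = 0" "sum f \<sigma> = 1"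
  shows "f \<in> geom_simplex \<sigma>"
  using assms by (auto simp: geom_simplex_def)

lemma geom_simplexD:
  assumes "f \<in> geom_simplex \<sigma>"
  shows "0 \<le> f x" "x \<notin> \<sigma> \<Longrightarrow> f x = 0" "sum f \<sigma> = 1"
  using assms by (auto simp: geom_simplex_def)

lemma geom_simplex_mono:
  assumes "f \<in> geom_simplex \<sigma>" "\<sigma> \<subseteq> \<tau>" "finite \<tau>"
  shows "f \<in> geom_simplex \<tau>"
proof (rule geom_simplexI)
  have "sum f \<tau> = sum f \<sigma>"
    by (rule sum.mono_neutral_right) (use assms geom_simplexD[OF assms(1)] in auto)
  then show "sum f \<tau> = 1" using geom_simplexD(3)[OF assms(1)] by simp
qed (use assms geom_simplexD[OF assms(1)] in auto)

lemma geom_simplex_empty [simp]: "geom_simplex {} = {}"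
  by (auto simp: geom_simplex_def)

lemma indicator_in_geom_simplex: "finite \<sigma> \<Longrightarrow> v \<in> \<sigma> \<Longrightarrow> indicator {v} \<in> geom_simplex \<sigma>"
  by (auto simp: geom_simplex_def indicator_def)

lemma closed_geom_simplex:
  assumes "finite \<sigma>"
  shows "closed (geom_simplex \<sigma>)"
proof -
  have "geom_simplex \<sigma> = (\<Inter>x. {f. 0 \<le> f x}) \<inter> (\<Inter>x\<in>-\<sigma>. {f. f x = 0}) \<inter> {f. sum f \<sigma> = 1}"
    by (auto simp: geom_simplex_def)
  moreover have "closed {f::'a\<Rightarrow>real. sum f \<sigma> = 1}" "closed {f::'a\<Rightarrow>real. 0 \<le> f x}"
    "closed {f::'a\<Rightarrow>real. f x = 0}" for x
    by (intro closed_Collect_eq closed_Collect_le continuous_intros; simp)+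
  ultimately show ?thesis by (auto intro!: closed_Int closed_INT)
qed

lemma convex_comb_vertex_in_geom_simplex:
  assumes "v \<notin> \<rho>" "finite \<rho>" "k \<in> geom_simplex \<rho>" "0 \<le> t" "t \<le> 1"
  shows "(\<lambda>y. t * indicator {v} y + (1 - t) * k y) \<in> geom_simplex (insert v \<rho>)"
proof (rule geom_simplexI)
  have "(\<Sum>y\<in>insert v \<rho>. t * indicator {v} y + (1 - t) * k y) = t + (1 - t) * sum k \<rho>"
    using assms(1,2) geom_simplexD(2)[OF assms(3), of v]
    by (simp add: sum.distrib sum_distrib_left indicator_def)
  then show "(\<Sum>y\<in>insert v \<rho>. t * indicator {v} y + (1 - t) * k y) = 1"
    using geom_simplexD(3)[OF assms(3)] by simp
qed (use assms geom_simplexD[OF assms(3)] in \<open>auto simp: indicator_def\<close>)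

lemma realizationI:
  assumes "\<sigma> \<in> K" "finite \<sigma>" "f \<in> geom_simplex \<sigma>"
  shows "f \<in> realization K"
proof -
  have supp: "{x. f x \<noteq> 0} \<subseteq> \<sigma>" using geom_simplexD[OF assms(3)] by auto
  have "sum f {x. f x \<noteq> 0} = sum f \<sigma>"
    by (rule sum.mono_neutral_left) (use assms supp in auto)
  then show ?thesis
    using assms supp geom_simplexD[OF assms(3)] unfolding realization_def by auto
qed

lemma realizationE:
  assumes "f \<in> realization K"
  obtains \<sigma> where "\<sigma> \<in> K" "finite \<sigma>" "f \<in> geom_simplex \<sigma>"
proof -
  from assms obtain \<sigma> where \<sigma>: "\<sigma> \<in> K" "finite \<sigma>" "{x. f x \<noteq> 0} \<subseteq> \<sigma>"
    and "\<forall>x. 0 \<le> f x" "sum f {x. f x \<noteq> 0} = 1"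
    unfolding realization_def by auto
  moreover have "sum f {x. f x \<noteq> 0} = sum f \<sigma>"
    by (rule sum.mono_neutral_left) (use \<sigma> in auto)
  ultimately show ?thesis using that by (auto simp: geom_simplex_def)
qed

lemma continuous_on_coordinate [continuous_intros]: "continuous_on S (\<lambda>f::'a \<Rightarrow> real. f i)"
  by (rule continuous_on_subset[OF continuous_on_product_coordinates]) simp

lemma homotopic_with_top_of_setI:
  fixes h :: "real \<times> 'b::topological_space \<Rightarrow> 'c::topological_space"
  assumes "continuous_on ({0..1} \<times> S) h" "h ` ({0..1} \<times> S) \<subseteq> T"
    "\<And>x. h (0, x) = f x" "\<And>x. h (1, x) = g x"
  shows "homotopic_with (\<lambda>_. True) (top_of_set S) (top_of_set T) f g"
  unfolding homotopic_with_def using assms by (intro exI[of _ h]) auto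

lemma homotopic_with_geom_straight_line:
  fixes f g :: "('v \<Rightarrow> real) \<Rightarrow> 'v \<Rightarrow> real"
  assumes "continuous_on (realization K) f" "continuous_on (realization K) g"
    and "\<And>x. x \<in> realization K \<Longrightarrow> \<exists>\<sigma>\<in>K. finite \<sigma> \<and> f x \<in> geom_simplex \<sigma> \<and> g x \<in> geom_simplex \<sigma>"
  shows "homotopic_with (\<lambda>_. True) (geom K) (geom K) f g"
  unfolding geom_def
proof (rule homotopic_with_top_of_setI)
  let ?h = "\<lambda>(s, x). (\<lambda>i. (1 - s) * f x i + s * g x i)"
  have "continuous_on ({0..1} \<times> realization K) (\<lambda>p. F (snd p) i)"
    if "continuous_on (realization K) F" for F :: "_ \<Rightarrow> 'v \<Rightarrow> real" and i
  proof -
    have "continuous_on ({0..1} \<times> realization K) (F \<circ> snd)"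
      by (intro continuous_on_compose continuous_on_snd continuous_on_subset[OF that]) auto
    from continuous_on_product_then_coordinatewise[OF this] show ?thesis by (simp add: o_def)
  qed
  with assms(1,2) show "continuous_on ({0..1} \<times> realization K) ?h"
    unfolding case_prod_beta by (intro continuous_intros) blast+
  have "?h (s, x) \<in> realization K" if s: "s \<in> {0..1::real}" and x: "x \<in> realization K" for s x
  proof -
    obtain \<sigma> where \<sigma>: "\<sigma> \<in> K" "finite \<sigma>" "f x \<in> geom_simplex \<sigma>" "g x \<in> geom_simplex \<sigma>"
      using assms(3)[OF x] by blast
    have "(\<lambda>i. (1 - s) * f x i + s * g x i) \<in> geom_simplex \<sigma>"
    proof (rule geom_simplexI)
      show "(\<Sum>i\<in>\<sigma>. (1 - s) * f x i + s * g x i) = 1"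
        using geom_simplexD(3)[OF \<sigma>(3)] geom_simplexD(3)[OF \<sigma>(4)]
        by (simp add: sum.distrib flip: sum_distrib_left)
    qed (use s geom_simplexD[OF \<sigma>(3)] geom_simplexD[OF \<sigma>(4)] in auto)
    then show ?thesis using \<sigma> by (auto intro: realizationI)
  qed
  then show "?h ` ({0..1} \<times> realization K) \<subseteq> realization K" by auto
qed auto

definition is_contraction :: "'v set set \<Rightarrow> (real \<times> ('v \<Rightarrow> real) \<Rightarrow> 'v \<Rightarrow> real) \<Rightarrow> ('v \<Rightarrow> real) \<Rightarrow> bool"
  where "is_contraction X h c \<longleftrightarrow> continuous_on ({0..1} \<times> realization X) h
      \<and> h ` ({0..1} \<times> realization X) \<subseteq> realization X
      \<and> (\<forall>x. h (0, x) = x) \<and> (\<forall>x. h (1, x) = c) \<and> c \<in> realization X"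

lemma contractible_cx_imp_contraction:
  assumes "contractible_cx X"
  shows "\<exists>h c. is_contraction X h c"
proof -
  obtain a where "homotopic_with (\<lambda>_. True) (geom X) (geom X) id (\<lambda>_. a)"
    using assms by (auto simp: contractible_cx_def contractible_space_def)
  then obtain h where "continuous_map (prod_topology (top_of_set {0..1::real}) (geom X)) (geom X) h"
    "\<forall>x. h (0, x) = x" "\<forall>x. h (1, x) = a"
    by (auto simp: homotopic_with_def)
  then have h: "continuous_on ({0..1} \<times> realization X) h"
    "h ` ({0..1} \<times> realization X) \<subseteq> realization X" "\<forall>x. h (0, x) = x" "\<forall>x. h (1, x) = a"
    by (auto simp: geom_def image_subset_iff_funcset)
  obtain x where "x \<in> realization X" using assms by (auto simp: contractible_cx_def)
  then have "a \<in> realization X" using h(2,4) by force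
  then show ?thesis using h unfolding is_contraction_def by blast
qed

lemma finite_Ind: "finite X \<Longrightarrow> finite (Ind X E)"
  by (rule finite_subset[of _ "Pow X"]) (auto simp: Ind_def)

lemma Ind_mono: "X \<subseteq> Y \<Longrightarrow> Ind X E \<subseteq> Ind Y E"
  by (auto simp: Ind_def)

lemma finite_Ind_face: "finite X \<Longrightarrow> \<sigma> \<in> Ind X E \<Longrightarrow> finite \<sigma>"
  by (auto simp: Ind_def intro: finite_subset)

lemma insert_in_Ind:
  assumes "\<sigma> \<in> Ind X E" "X \<subseteq> Y" "a \<in> Y" "\<not> E a a" "\<And>x. x \<in> \<sigma> \<Longrightarrow> \<not> E a x \<and> \<not> E x a"
  shows "insert a \<sigma> \<in> Ind Y E"
  using assms by (auto simp: Ind_def)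

definition equator :: "'i \<Rightarrow> 'a set \<Rightarrow> ('i \<times> ('a + bool)) option set" where
  "equator v \<tau> = (\<lambda>x. Some (v, Inl x)) ` \<tau>"

definition north_face :: "'i \<Rightarrow> 'a set \<Rightarrow> ('i \<times> ('a + bool)) option set" where
  "north_face v \<tau> = insert None (equator v \<tau>)"

definition south_face :: "'i \<Rightarrow> 'a set \<Rightarrow> ('i \<times> ('a + bool)) option set" where
  "south_face v \<tau> = insert (Some (v, Inr False)) (equator v \<tau>)"

lemma finite_equator [simp]: "finite (equator v \<tau>) \<longleftrightarrow> finite \<tau>"
  by (auto simp: equator_def inj_on_def dest: finite_imageD)

lemma finite_north_face [simp]: "finite (north_face v \<tau>) \<longleftrightarrow> finite \<tau>"
  and finite_south_face [simp]: "finite (south_face v \<tau>) \<longleftrightarrow> finite \<tau>"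
  by (simp_all add: north_face_def south_face_def)

lemma equator_subset: "equator v \<tau> \<subseteq> north_face v \<tau>" "equator v \<tau> \<subseteq> south_face v \<tau>"
  by (auto simp: north_face_def south_face_def)

lemma mem_equator [simp]:
  "None \<notin> equator v \<tau>" "Some (w, Inr b) \<notin> equator v \<tau>"
  "Some (w, Inl x) \<in> equator v \<tau> \<longleftrightarrow> w = v \<and> x \<in> \<tau>"
  by (auto simp: equator_def)

lemma sum_equator: "sum p (equator v \<tau>) = (\<Sum>x\<in>\<tau>. p (Some (v, Inl x)))"
  unfolding equator_def by (simp add: sum.reindex inj_on_def)

lemma sum_north_face: "finite \<tau> \<Longrightarrow> sum p (north_face v \<tau>) = p None + (\<Sum>x\<in>\<tau>. p (Some (v, Inl x)))"
  and sum_south_face: "finite \<tau> \<Longrightarrow>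
    sum p (south_face v \<tau>) = p (Some (v, Inr False)) + (\<Sum>x\<in>\<tau>. p (Some (v, Inl x)))"
  by (simp_all add: north_face_def south_face_def sum_equator)

lemma wedge_vertex_cases:
  fixes z :: "('i \<times> ('a + bool)) option"
  obtains "z = None" | v x where "z = Some (v, Inl x)" | v b where "z = Some (v, Inr b)"
  by (metis old.sum.exhaust option.exhaust surj_pair)

text \<open>The factor \<open>1 / (1 - t)\<close> restoring total weight 1 to the part of a point outside a vertex
  of weight \<open>t\<close>, frozen at its value \<open>2\<close> for \<open>t \<ge> 1/2\<close>.\<close>
definition renorm :: "real \<Rightarrow> real" where
  "renorm t = 1 / (1 - min t (1/2))"

lemma renorm_pos: "0 < renorm t"
  by (simp add: renorm_def)

lemma renorm_nonneg: "0 \<le> renorm t"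
  using renorm_pos less_imp_le by blast

lemma renorm_0 [simp]: "renorm 0 = 1"
  by (simp add: renorm_def)

lemma renorm_low: "t \<le> 1/2 \<Longrightarrow> renorm t * (1 - t) = 1"
  by (simp add: renorm_def)

lemma renorm_high: "1/2 \<le> t \<Longrightarrow> renorm t = 2"
  by (simp add: renorm_def min_absorb2)

lemma continuous_on_renorm [continuous_intros]:
  "continuous_on S g \<Longrightarrow> continuous_on S (\<lambda>x. renorm (g x))"
  unfolding renorm_def by (intro continuous_intros) (auto simp: min_def)

section \<open>Independence complexes at a simplicial vertex\<close>

locale simplicial_vertex =
  fixes V :: "'a set" and E :: "'a \<Rightarrow> 'a \<Rightarrow> bool" and u :: 'a
  assumes finite_V: "finite V" and sym_E: "\<And>x y. E x y \<Longrightarrow> E y x" and irrefl_E: "\<And>x. \<not> E x x"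
    and u_in_V: "u \<in> V"
    and clique_N: "\<And>x y. x \<in> nbhd V E u \<Longrightarrow> y \<in> nbhd V E u \<Longrightarrow> x \<noteq> y \<Longrightarrow> E x y"
begin

abbreviation "N \<equiv> nbhd V E u"
abbreviation "H v \<equiv> V - (N \<union> nbhd V E v)"
abbreviation "K \<equiv> Ind V E"
abbreviation "L v \<equiv> Ind (H v) E"

text \<open>In the wedge the apex \<open>Inr True\<close> of every suspension is the base point \<open>None\<close>, so
  the north face over \<open>\<tau>\<close> is the cone from the base point.\<close>
abbreviation "W \<equiv> wedge_cx N (\<lambda>v. susp_cx (L v)) (\<lambda>v. Inr True)"

lemma finite_N: "finite N" and u_notin_N: "u \<notin> N"
  using finite_V irrefl_E by (auto simp: nbhd_def)

lemma mem_N: "v \<in> N \<Longrightarrow> v \<in> V \<and> E u v \<and> E v u"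
  using sym_E by (auto simp: nbhd_def)

lemma mem_H:
  assumes "v \<in> N" "x \<in> H v"
  shows "x \<in> V" "x \<notin> N" "x \<noteq> u" "\<not> E v x \<and> \<not> E x v" "\<not> E u x \<and> \<not> E x u"
  using assms sym_E[of x v] sym_E[of x u] mem_N[OF assms(1)] u_in_V by (auto simp: nbhd_def)

lemma finite_K_face: "\<sigma> \<in> K \<Longrightarrow> finite \<sigma>"
  and finite_L_face: "\<tau> \<in> L v \<Longrightarrow> finite \<tau>"
  using finite_V by (auto intro: finite_Ind_face)

lemma L_subset_K: "L v \<subseteq> K"
  by (rule Ind_mono) blast

lemma L_face_Int_N: "\<tau> \<in> L v \<Longrightarrow> \<tau> \<inter> N = {}"
  by (auto simp: Ind_def)

lemma v_notin_L_face: "v \<in> N \<Longrightarrow> \<tau> \<in> L v \<Longrightarrow> v \<notin> \<tau>"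
  using L_face_Int_N by blast

lemma u_notin_L_face: "v \<in> N \<Longrightarrow> \<tau> \<in> L v \<Longrightarrow> u \<notin> \<tau>"
  using mem_H(3) by (auto simp: Ind_def)

lemma insert_u_in_K:
  assumes "\<sigma> \<in> K" "\<sigma> \<inter> N = {}"
  shows "insert u \<sigma> \<in> K"
proof (rule insert_in_Ind[OF assms(1) order_refl u_in_V irrefl_E])
  fix x assume "x \<in> \<sigma>"
  then have "\<not> E u x" using assms by (auto simp: Ind_def nbhd_def)
  then show "\<not> E u x \<and> \<not> E x u" using sym_E by blast
qed

lemma insert_v_L_face_in_K:
  assumes "v \<in> N" "\<tau> \<in> L v"
  shows "insert v \<tau> \<in> K"
proof (rule insert_in_Ind[OF assms(2) _ _ irrefl_E])
  show "H v \<subseteq> V" "v \<in> V" using mem_N[OF assms(1)] by auto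
  show "\<not> E v x \<and> \<not> E x v" if "x \<in> \<tau>" for x
    using that assms(2) by (intro mem_H(4)[OF assms(1)]) (auto simp: Ind_def)
qed

lemma insert_u_L_face_in_K: "v \<in> N \<Longrightarrow> \<tau> \<in> L v \<Longrightarrow> insert u \<tau> \<in> K"
  using insert_u_in_K L_subset_K L_face_Int_N by blast

text \<open>Since \<open>N\<close> is a clique, a face meets it in at most one vertex \<open>v\<close>, and the rest of the
  face avoids \<open>N \<union> N(v)\<close>.\<close>
lemma K_face_cases:
  assumes "\<sigma> \<in> K"
  obtains (off_N) "\<sigma> \<inter> N = {}" | (star) v \<tau> where "v \<in> N" "\<tau> \<in> L v" "\<sigma> = insert v \<tau>"
proof (cases "\<sigma> \<inter> N = {}")
  case False
  then obtain v where v: "v \<in> \<sigma>" "v \<in> N" by auto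
  have indep: "\<sigma> \<subseteq> V" "\<And>x y. x \<in> \<sigma> \<Longrightarrow> y \<in> \<sigma> \<Longrightarrow> \<not> E x y"
    using assms by (auto simp: Ind_def)
  have "x \<in> H v" if "x \<in> \<sigma> - {v}" for x
  proof -
    have "\<not> E x v" "\<not> E v x" using that v indep(2) by auto
    then show ?thesis using that indep(1) clique_N[of x v] v(2) by (auto simp: nbhd_def)
  qed
  then have "\<sigma> - {v} \<in> L v"
    using indep(2) by (auto simp: Ind_def)
  then show ?thesis using star[of v "\<sigma> - {v}"] v by blast
qed

lemma realization_K_cases:
  assumes "f \<in> realization K"
  obtains (off_N) \<sigma> where "\<sigma> \<in> K" "\<sigma> \<inter> N = {}" "f \<in> geom_simplex \<sigma>"
    | (star) v \<tau> where "v \<in> N" "\<tau> \<in> L v" "f \<in> geom_simplex (insert v \<tau>)"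
proof -
  obtain \<sigma> where \<sigma>: "\<sigma> \<in> K" "f \<in> geom_simplex \<sigma>" using assms by (auto elim: realizationE)
  from \<sigma>(1) show ?thesis
  proof (cases rule: K_face_cases)
    case off_N then show ?thesis using \<sigma> that(1) by blast
  next
    case (star v \<tau>) then show ?thesis using \<sigma> that(2) by blast
  qed
qed

definition N_weight :: "('a \<Rightarrow> real) \<Rightarrow> real" where
  "N_weight f = sum f N"

lemma N_weight_off_N: "\<sigma> \<inter> N = {} \<Longrightarrow> f \<in> geom_simplex \<sigma> \<Longrightarrow> N_weight f = 0"
  using geom_simplexD(2)[of f \<sigma>] by (auto simp: N_weight_def intro!: sum.neutral)

context
  fixes v \<tau> f assumes v: "v \<in> N" and \<tau>: "\<tau> \<in> L v" and f: "f \<in> geom_simplex (insert v \<tau>)"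
begin

lemma star_pt_N: "w \<in> N \<Longrightarrow> w \<noteq> v \<Longrightarrow> f w = 0"
  using L_face_Int_N[OF \<tau>] geom_simplexD(2)[OF f] by blast

lemma star_pt_N_weight: "N_weight f = f v"
  using star_pt_N finite_N v by (simp add: N_weight_def sum.remove)

lemma star_pt_sum_L: "sum f \<tau> = 1 - f v"
proof -
  have "v \<notin> \<tau>" using v_notin_L_face[OF v \<tau>] .
  then show ?thesis using geom_simplexD(3)[OF f] finite_L_face[OF \<tau>] by simp
qed

end

lemma base_in_W: "{None} \<in> W"
  by (simp add: wedge_cx_def)

lemma north_face_in_W:
  assumes "v \<in> N" "\<tau> \<in> L v"
  shows "north_face v \<tau> \<in> W"
proof -
  have "Inl ` \<tau> \<union> {Inr True} \<in> susp_cx (L v)"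
    using assms(2) unfolding susp_cx_def by blast
  moreover have "(\<lambda>x. if x = Inr True then None else Some (v, x)) ` (Inl ` \<tau> \<union> {Inr True})
      = north_face v \<tau>"
    by (auto simp: north_face_def equator_def)
  ultimately show ?thesis using assms(1) unfolding wedge_cx_def by blast
qed

lemma south_face_in_W:
  assumes "v \<in> N" "\<tau> \<in> L v"
  shows "south_face v \<tau> \<in> W"
proof -
  have "Inl ` \<tau> \<union> {Inr False} \<in> susp_cx (L v)"
    using assms(2) unfolding susp_cx_def by blast
  moreover have "(\<lambda>x. if x = Inr True then None else Some (v, x)) ` (Inl ` \<tau> \<union> {Inr False})
      = south_face v \<tau>"
    by (auto simp: south_face_def equator_def)
  ultimately show ?thesis using assms(1) unfolding wedge_cx_def by blast
qed

lemma W_face_cases: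
  assumes "\<sigma> \<in> W" "\<sigma> \<noteq> {}" "\<sigma> \<noteq> {None}"
  obtains v \<tau> where "v \<in> N" "\<tau> \<in> L v" "\<sigma> \<subseteq> north_face v \<tau> \<or> \<sigma> \<subseteq> south_face v \<tau>"
proof -
  obtain v \<rho> where v: "v \<in> N" "\<rho> \<in> susp_cx (L v)"
    and \<sigma>_eq: "\<sigma> = (\<lambda>x. if x = Inr True then None else Some (v, x)) ` \<rho>"
    using assms unfolding wedge_cx_def by auto
  then obtain \<tau> T where \<rho>: "\<rho> = Inl ` \<tau> \<union> T" "\<tau> \<in> L v" "T \<in> {{}, {Inr True}, {Inr False}}"
    unfolding susp_cx_def by auto
  have "\<sigma> \<subseteq> north_face v \<tau> \<or> \<sigma> \<subseteq> south_face v \<tau>"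
    using \<rho>(3) unfolding \<sigma>_eq \<rho>(1) north_face_def south_face_def equator_def by auto
  then show ?thesis using that v \<rho>(2) by blast
qed

lemma realization_W_cases:
  assumes "p \<in> realization W"
  obtains (base) "p \<in> geom_simplex {None}"
    | (north) v \<tau> where "v \<in> N" "\<tau> \<in> L v" "p \<in> geom_simplex (north_face v \<tau>)"
    | (south) v \<tau> where "v \<in> N" "\<tau> \<in> L v" "p \<in> geom_simplex (south_face v \<tau>)"
proof -
  obtain \<sigma> where \<sigma>: "\<sigma> \<in> W" "p \<in> geom_simplex \<sigma>" using assms by (auto elim: realizationE)
  show ?thesis
  proof (cases "\<sigma> = {None}")
    case False
    moreover have "\<sigma> \<noteq> {}" using \<sigma>(2) by auto
    ultimately obtain v \<tau> where v: "v \<in> N" "\<tau> \<in> L v"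
      and "\<sigma> \<subseteq> north_face v \<tau> \<or> \<sigma> \<subseteq> south_face v \<tau>"
      using W_face_cases \<sigma>(1) by blast
    then show ?thesis
      using that(2,3)[OF v] geom_simplex_mono[OF \<sigma>(2)] finite_L_face[OF v(2)] by auto
  qed (use \<sigma> that(1) in simp)
qed

section \<open>The wedge decomposition\<close>

text \<open>On the simplex \<open>{v} \<union> \<tau>\<close> with weight \<open>t\<close> at \<open>v\<close>, the half \<open>t \<le> 1/2\<close> is stretched over the
  north face and the half \<open>t \<ge> 1/2\<close> over the south face of \<open>\<tau>\<close> in the \<open>v\<close>-th suspension.\<close>
definition to_wedge :: "('a \<Rightarrow> real) \<Rightarrow> ('a \<times> ('a + bool)) option \<Rightarrow> real" where
  "to_wedge f z = (case z of
       None \<Rightarrow> max 0 (1 - 2 * N_weight f)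
     | Some (v, Inl x) \<Rightarrow> if v \<in> N \<and> x \<notin> N then 2 * min (f v) (1/2) * renorm (f v) * f x else 0
     | Some (v, Inr b) \<Rightarrow> if v \<in> N \<and> \<not> b then max 0 (2 * f v - 1) else 0)"

text \<open>The simplicial map sending the base point to \<open>u\<close>, the south pole of the \<open>v\<close>-th
  suspension to \<open>v\<close> and each vertex of its equator to itself.\<close>
definition from_wedge :: "(('a \<times> ('a + bool)) option \<Rightarrow> real) \<Rightarrow> 'a \<Rightarrow> real" where
  "from_wedge p y = (if y = u then p None else 0) + (if y \<in> N then p (Some (y, Inr False)) else 0)
      + (if y \<notin> N then (\<Sum>w\<in>N. p (Some (w, Inl y))) else 0)"

text \<open>Intermediate maps: each is straight-line homotopic both to the identity and to the
  corresponding composite of \<open>to_wedge\<close> and \<open>from_wedge\<close>.\<close>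
definition deform_K :: "('a \<Rightarrow> real) \<Rightarrow> 'a \<Rightarrow> real" where
  "deform_K f y = (if y \<in> N then max 0 (2 * f y - 1) else renorm (N_weight f) * f y)"

definition deform_W :: "(('a \<times> ('a + bool)) option \<Rightarrow> real) \<Rightarrow> ('a \<times> ('a + bool)) option \<Rightarrow> real"
  where "deform_W p z = (case z of
       None \<Rightarrow> p None
     | Some (v, Inl x) \<Rightarrow> renorm (p (Some (v, Inr False))) * p z
     | Some (v, Inr b) \<Rightarrow> if b then p z else max 0 (2 * p z - 1))"

lemma to_wedge_simps [simp]:
  "to_wedge f None = max 0 (1 - 2 * N_weight f)"
  "to_wedge f (Some (v, Inl x))
     = (if v \<in> N \<and> x \<notin> N then 2 * min (f v) (1/2) * renorm (f v) * f x else 0)"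
  "to_wedge f (Some (v, Inr b)) = (if v \<in> N \<and> \<not> b then max 0 (2 * f v - 1) else 0)"
  by (simp_all add: to_wedge_def)

lemma deform_W_simps [simp]:
  "deform_W p None = p None"
  "deform_W p (Some (v, Inl x)) = renorm (p (Some (v, Inr False))) * p (Some (v, Inl x))"
  "deform_W p (Some (v, Inr b))
     = (if b then p (Some (v, Inr b)) else max 0 (2 * p (Some (v, Inr b)) - 1))"
  by (simp_all add: deform_W_def)

lemma to_wedge_nonneg: "(\<And>x. 0 \<le> f x) \<Longrightarrow> 0 \<le> to_wedge f z"
  by (cases z rule: wedge_vertex_cases) (auto intro!: mult_nonneg_nonneg renorm_nonneg)

lemma from_wedge_nonneg: "(\<And>z. 0 \<le> p z) \<Longrightarrow> 0 \<le> from_wedge p y"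
  unfolding from_wedge_def by (intro add_nonneg_nonneg) (auto intro: sum_nonneg)

lemma deform_K_nonneg: "(\<And>x. 0 \<le> f x) \<Longrightarrow> 0 \<le> deform_K f y"
  by (auto simp: deform_K_def intro!: mult_nonneg_nonneg renorm_nonneg)

lemma deform_W_nonneg: "(\<And>z. 0 \<le> p z) \<Longrightarrow> 0 \<le> deform_W p z"
  by (cases z rule: wedge_vertex_cases) (auto intro!: mult_nonneg_nonneg renorm_nonneg)

lemma to_wedge_off_N:
  assumes "\<sigma> \<inter> N = {}" "f \<in> geom_simplex \<sigma>"
  shows "to_wedge f \<in> geom_simplex {None}"
proof (rule geom_simplexI)
  have N0: "f w = 0" if "w \<in> N" for w
    using assms(1) that by (intro geom_simplexD(2)[OF assms(2)]) blast
  show "to_wedge f z = 0" if "z \<notin> {None}" for z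
  proof (cases z rule: wedge_vertex_cases)
    case (2 w x) then show ?thesis using N0[of w] by (simp add: min_def)
  next
    case (3 w b) then show ?thesis using N0[of w] by simp
  qed (use that in simp)
  show "sum (to_wedge f) {None} = 1" using N_weight_off_N[OF assms] by simp
  show "0 \<le> to_wedge f z" for z by (rule to_wedge_nonneg[OF geom_simplexD(1)[OF assms(2)]])
qed

lemma deform_K_off_N:
  assumes "\<sigma> \<inter> N = {}" "f \<in> geom_simplex \<sigma>"
  shows "deform_K f = f"
proof
  fix y
  have "f y = 0" if "y \<in> N" using assms(1) that by (intro geom_simplexD(2)[OF assms(2)]) blast
  then show "deform_K f y = f y" using N_weight_off_N[OF assms] by (simp add: deform_K_def)
qed

context
  fixes v \<tau> f assumes v: "v \<in> N" and \<tau>: "\<tau> \<in> L v" and f: "f \<in> geom_simplex (insert v \<tau>)"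
begin

lemma to_wedge_star_support:
  assumes z: "z \<notin> north_face v \<tau> \<union> south_face v \<tau>"
  shows "to_wedge f z = 0"
proof (cases z rule: wedge_vertex_cases)
  case (2 w x)
  show ?thesis
  proof (cases "w = v")
    case True
    then have "x \<notin> N \<Longrightarrow> x \<notin> insert v \<tau>" using z 2 v by (auto simp: north_face_def)
    then show ?thesis using 2 True geom_simplexD(2)[OF f, of x] by auto
  next
    case False
    then show ?thesis using 2 star_pt_N[OF v \<tau> f, of w] by (simp add: min_def)
  qed
next
  case (3 w b)
  then have "w \<in> N \<Longrightarrow> \<not> b \<Longrightarrow> w \<noteq> v" using z by (auto simp: south_face_def)
  then show ?thesis using 3 star_pt_N[OF v \<tau> f, of w] by auto
qed (use z in \<open>simp add: north_face_def\<close>)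

lemma to_wedge_equator_sum:
  "(\<Sum>x\<in>\<tau>. to_wedge f (Some (v, Inl x))) = 2 * min (f v) (1/2) * renorm (f v) * (1 - f v)"
proof -
  have "(\<Sum>x\<in>\<tau>. to_wedge f (Some (v, Inl x))) = (\<Sum>x\<in>\<tau>. 2 * min (f v) (1/2) * renorm (f v) * f x)"
    using v L_face_Int_N[OF \<tau>] by (intro sum.cong) auto
  then show ?thesis by (simp add: star_pt_sum_L[OF v \<tau> f] flip: sum_distrib_left)
qed

lemma to_wedge_north:
  assumes low: "f v \<le> 1/2"
  shows "to_wedge f \<in> geom_simplex (north_face v \<tau>)"
proof (rule geom_simplexI)
  show "0 \<le> to_wedge f z" for z by (rule to_wedge_nonneg[OF geom_simplexD(1)[OF f]])
  show "to_wedge f z = 0" if "z \<notin> north_face v \<tau>" for z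
  proof (cases "z = Some (v, Inr False)")
    case False
    then show ?thesis using that to_wedge_star_support by (auto simp: south_face_def north_face_def)
  qed (use v low in simp)
  have "sum (to_wedge f) (north_face v \<tau>) = to_wedge f None + (\<Sum>x\<in>\<tau>. to_wedge f (Some (v, Inl x)))"
    using finite_L_face[OF \<tau>] by (rule sum_north_face)
  also have "\<dots> = 1"
    unfolding to_wedge_equator_sum using low renorm_low[OF low] star_pt_N_weight[OF v \<tau> f]
    by (simp add: min_absorb1 mult.assoc)
  finally show "sum (to_wedge f) (north_face v \<tau>) = 1" .
qed

lemma to_wedge_south:
  assumes high: "1/2 \<le> f v"
  shows "to_wedge f \<in> geom_simplex (south_face v \<tau>)"
proof (rule geom_simplexI)
  show "0 \<le> to_wedge f z" for z by (rule to_wedge_nonneg[OF geom_simplexD(1)[OF f]])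
  show "to_wedge f z = 0" if "z \<notin> south_face v \<tau>" for z
  proof (cases "z = None")
    case False
    then show ?thesis using that to_wedge_star_support by (auto simp: south_face_def north_face_def)
  qed (use high star_pt_N_weight[OF v \<tau> f] in simp)
  have "sum (to_wedge f) (south_face v \<tau>)
      = to_wedge f (Some (v, Inr False)) + (\<Sum>x\<in>\<tau>. to_wedge f (Some (v, Inl x)))"
    using finite_L_face[OF \<tau>] by (rule sum_south_face)
  also have "\<dots> = 1"
    unfolding to_wedge_equator_sum using v high renorm_high[OF high] by (simp add: min_absorb2)
  finally show "sum (to_wedge f) (south_face v \<tau>) = 1" .
qed

lemma deform_K_equator_sum: "(\<Sum>x\<in>\<tau>. deform_K f x) = renorm (f v) * (1 - f v)"
proof -
  have "(\<Sum>x\<in>\<tau>. deform_K f x) = (\<Sum>x\<in>\<tau>. renorm (f v) * f x)"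
    using L_face_Int_N[OF \<tau>] star_pt_N_weight[OF v \<tau> f] by (intro sum.cong) (auto simp: deform_K_def)
  then show ?thesis by (simp add: star_pt_sum_L[OF v \<tau> f] flip: sum_distrib_left)
qed

lemma deform_K_star_support:
  assumes "y \<notin> insert v \<tau>"
  shows "deform_K f y = 0"
proof (cases "y \<in> N")
  case True
  then show ?thesis using assms star_pt_N[OF v \<tau> f, of y] by (simp add: deform_K_def)
next
  case False
  then show ?thesis using geom_simplexD(2)[OF f assms] by (simp add: deform_K_def)
qed

lemma deform_K_low:
  assumes low: "f v \<le> 1/2"
  shows "deform_K f \<in> geom_simplex \<tau>"
proof (rule geom_simplexI)
  show "0 \<le> deform_K f y" for y by (rule deform_K_nonneg[OF geom_simplexD(1)[OF f]])
  show "deform_K f y = 0" if "y \<notin> \<tau>" for y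
  proof (cases "y = v")
    case False
    then show ?thesis using that deform_K_star_support by simp
  qed (use v low in \<open>simp add: deform_K_def\<close>)
  show "sum (deform_K f) \<tau> = 1"
    using deform_K_equator_sum renorm_low[OF low] by simp
qed

lemma deform_K_high:
  assumes high: "1/2 \<le> f v"
  shows "deform_K f \<in> geom_simplex (insert v \<tau>)"
proof (rule geom_simplexI)
  show "0 \<le> deform_K f y" for y by (rule deform_K_nonneg[OF geom_simplexD(1)[OF f]])
  show "deform_K f y = 0" if "y \<notin> insert v \<tau>" for y
    using that by (rule deform_K_star_support)
  show "sum (deform_K f) (insert v \<tau>) = 1"
    using v high renorm_high[OF high] deform_K_equator_sum v_notin_L_face[OF v \<tau>] finite_L_face[OF \<tau>]
    by (simp add: deform_K_def)
qed

end

lemma from_wedge_base: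
  assumes "p \<in> geom_simplex {None}"
  shows "from_wedge p \<in> geom_simplex {u}"
proof (rule geom_simplexI)
  show "0 \<le> from_wedge p y" for y by (rule from_wedge_nonneg[OF geom_simplexD(1)[OF assms]])
  have "p (Some z) = 0" for z using geom_simplexD(2)[OF assms] by simp
  then show "from_wedge p y = 0" if "y \<notin> {u}" for y
    using that by (simp add: from_wedge_def)
  show "sum (from_wedge p) {u} = 1"
    using \<open>p (Some _) = 0\<close> u_notin_N geom_simplexD(3)[OF assms] by (simp add: from_wedge_def)
qed

context
  fixes v \<tau> assumes v: "v \<in> N" and \<tau>: "\<tau> \<in> L v"
begin

lemma from_wedge_star_face:
  assumes p: "p \<in> geom_simplex (north_face v \<tau>) \<or> p \<in> geom_simplex (south_face v \<tau>)"
  shows "from_wedge p y = (if y = u then p None else 0) + (if y = v then p (Some (v, Inr False)) else 0)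
     + (if y \<in> \<tau> then p (Some (v, Inl y)) else 0)"
proof -
  have p0: "p z = 0" if "z \<notin> north_face v \<tau> \<union> south_face v \<tau>" for z
    using p that geom_simplexD(2)[of p _ z] by auto
  have "p (Some (w, Inl y)) = 0" if "w \<noteq> v \<or> y \<notin> \<tau>" for w
    using that by (intro p0) (auto simp: north_face_def south_face_def)
  then have "(\<Sum>w\<in>N. p (Some (w, Inl y))) = (if y \<in> \<tau> then p (Some (v, Inl y)) else 0)"
    using v finite_N by (simp add: sum.remove)
  moreover have "p (Some (y, Inr False)) = 0" if "y \<noteq> v"
    using that by (intro p0) (auto simp: north_face_def south_face_def)
  ultimately show ?thesis
    using v u_notin_N u_notin_L_face[OF v \<tau>] L_face_Int_N[OF \<tau>] by (auto simp: from_wedge_def)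
qed

lemma from_wedge_equator_sum:
  assumes "p \<in> geom_simplex (north_face v \<tau>) \<or> p \<in> geom_simplex (south_face v \<tau>)"
  shows "(\<Sum>y\<in>\<tau>. from_wedge p y) = (\<Sum>y\<in>\<tau>. p (Some (v, Inl y)))"
  using u_notin_L_face[OF v \<tau>] v_notin_L_face[OF v \<tau>]
  by (intro sum.cong) (auto simp: from_wedge_star_face[OF assms])

lemma from_wedge_north:
  assumes p: "p \<in> geom_simplex (north_face v \<tau>)"
  shows "from_wedge p \<in> geom_simplex (insert u \<tau>)"
proof (rule geom_simplexI)
  show "0 \<le> from_wedge p y" for y by (rule from_wedge_nonneg[OF geom_simplexD(1)[OF p]])
  have "p (Some (v, Inr False)) = 0" using geom_simplexD(2)[OF p] by (simp add: north_face_def)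
  then show "from_wedge p y = 0" if "y \<notin> insert u \<tau>" for y
    using that p by (simp add: from_wedge_star_face)
  have "from_wedge p u = p None"
    using p v u_notin_N u_notin_L_face[OF v \<tau>] by (auto simp: from_wedge_star_face)
  then show "sum (from_wedge p) (insert u \<tau>) = 1"
    using p geom_simplexD(3)[OF p] u_notin_L_face[OF v \<tau>] finite_L_face[OF \<tau>]
    by (simp add: from_wedge_equator_sum sum_north_face)
qed

lemma from_wedge_south:
  assumes p: "p \<in> geom_simplex (south_face v \<tau>)"
  shows "from_wedge p \<in> geom_simplex (insert v \<tau>)"
proof (rule geom_simplexI)
  show "0 \<le> from_wedge p y" for y by (rule from_wedge_nonneg[OF geom_simplexD(1)[OF p]])
  have "p None = 0" using geom_simplexD(2)[OF p] by (simp add: south_face_def)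
  then show "from_wedge p y = 0" if "y \<notin> insert v \<tau>" for y
    using that p by (simp add: from_wedge_star_face)
  have "from_wedge p v = p (Some (v, Inr False))"
    using p v u_notin_N v_notin_L_face[OF v \<tau>] by (auto simp: from_wedge_star_face)
  then show "sum (from_wedge p) (insert v \<tau>) = 1"
    using p geom_simplexD(3)[OF p] v_notin_L_face[OF v \<tau>] finite_L_face[OF \<tau>]
    by (simp add: from_wedge_equator_sum sum_south_face)
qed

lemma deform_W_south_low:
  assumes p: "p \<in> geom_simplex (south_face v \<tau>)" and low: "p (Some (v, Inr False)) \<le> 1/2"
  shows "deform_W p \<in> geom_simplex (equator v \<tau>)"
proof (rule geom_simplexI)
  show "0 \<le> deform_W p z" for z by (rule deform_W_nonneg[OF geom_simplexD(1)[OF p]])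
  show "deform_W p z = 0" if "z \<notin> equator v \<tau>" for z
  proof (cases "z = Some (v, Inr False)")
    case False
    then have "z \<notin> south_face v \<tau>" using that by (simp add: south_face_def)
    then show ?thesis using geom_simplexD(2)[OF p] by (cases z rule: wedge_vertex_cases) auto
  qed (use low in simp)
  have "sum (deform_W p) (equator v \<tau>)
      = renorm (p (Some (v, Inr False))) * (1 - p (Some (v, Inr False)))"
    using geom_simplexD(3)[OF p] finite_L_face[OF \<tau>]
    by (simp add: sum_equator sum_south_face flip: sum_distrib_left)
  then show "sum (deform_W p) (equator v \<tau>) = 1"
    using renorm_low[OF low] by simp
qed

lemma deform_W_south_high:
  assumes p: "p \<in> geom_simplex (south_face v \<tau>)" and high: "1/2 \<le> p (Some (v, Inr False))"
  shows "deform_W p \<in> geom_simplex (south_face v \<tau>)"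
proof (rule geom_simplexI)
  show "0 \<le> deform_W p z" for z by (rule deform_W_nonneg[OF geom_simplexD(1)[OF p]])
  show "deform_W p z = 0" if "z \<notin> south_face v \<tau>" for z
    using geom_simplexD(2)[OF p that] by (cases z rule: wedge_vertex_cases) auto
  show "sum (deform_W p) (south_face v \<tau>) = 1"
    using geom_simplexD(3)[OF p] finite_L_face[OF \<tau>] high renorm_high[OF high]
    by (simp add: sum_south_face flip: sum_distrib_left)
qed

end

lemma deform_W_eq_self:
  assumes "\<And>w. p (Some (w, Inr False)) = 0"
  shows "deform_W p = p"
proof
  fix z show "deform_W p z = p z" using assms by (cases z rule: wedge_vertex_cases) auto
qed

lemma deform_W_base: "p \<in> geom_simplex {None} \<Longrightarrow> deform_W p = p"
  and deform_W_north: "p \<in> geom_simplex (north_face v \<tau>) \<Longrightarrow> deform_W p = p"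
  by (rule deform_W_eq_self, erule geom_simplexD(2), simp add: north_face_def)+

lemma continuous_on_to_wedge: "continuous_on S to_wedge"
proof (intro continuous_on_coordinatewise_then_product)
  fix z
  show "continuous_on S (\<lambda>f. to_wedge f z)"
  proof (cases z rule: wedge_vertex_cases)
    case (2 w x)
    then show ?thesis by (cases "w \<in> N \<and> x \<notin> N") (auto intro!: continuous_intros)
  next
    case (3 w b)
    then show ?thesis by (cases "w \<in> N \<and> \<not> b") (auto intro!: continuous_intros)
  qed (auto simp: N_weight_def intro!: continuous_intros)
qed

lemma continuous_on_from_wedge: "continuous_on S from_wedge"
proof (intro continuous_on_coordinatewise_then_product)
  fix y
  show "continuous_on S (\<lambda>p. from_wedge p y)"
    unfolding from_wedge_def by (cases "y = u"; cases "y \<in> N") (auto intro!: continuous_intros)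
qed

lemma continuous_on_deform_K: "continuous_on S deform_K"
proof (intro continuous_on_coordinatewise_then_product)
  fix y
  show "continuous_on S (\<lambda>f. deform_K f y)"
    unfolding deform_K_def N_weight_def by (cases "y \<in> N") (auto intro!: continuous_intros)
qed

lemma continuous_on_deform_W: "continuous_on S deform_W"
proof (intro continuous_on_coordinatewise_then_product)
  fix z
  show "continuous_on S (\<lambda>p. deform_W p z)"
    by (cases z rule: wedge_vertex_cases; cases "z = Some (fst (the z), Inr True)")
      (auto intro!: continuous_intros)
qed

lemma to_wedge_in_realization:
  assumes "f \<in> realization K"
  shows "to_wedge f \<in> realization W"
  using assms
proof (cases rule: realization_K_cases)
  case off_N
  then show ?thesis using to_wedge_off_N base_in_W by (auto intro: realizationI)
next
  case (star v \<tau>)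
  have "to_wedge f \<in> geom_simplex (north_face v \<tau>) \<or> to_wedge f \<in> geom_simplex (south_face v \<tau>)"
    using to_wedge_north[OF star] to_wedge_south[OF star] by linarith
  then show ?thesis
    using north_face_in_W[OF star(1,2)] south_face_in_W[OF star(1,2)] finite_L_face[OF star(2)]
    by (auto intro: realizationI)
qed

lemma from_wedge_in_realization:
  assumes "p \<in> realization W"
  shows "from_wedge p \<in> realization K"
  using assms
proof (cases rule: realization_W_cases)
  case base
  have "{u} \<in> K" using insert_u_in_K[of "{}"] by (simp add: Ind_def)
  then show ?thesis using from_wedge_base[OF base] by (auto intro: realizationI)
next
  case (north v \<tau>)
  then show ?thesis
    using from_wedge_north insert_u_L_face_in_K finite_L_face by (blast intro: realizationI)
next
  case (south v \<tau>)
  then show ?thesis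
    using from_wedge_south insert_v_L_face_in_K finite_L_face by (blast intro: realizationI)
qed

lemma homotopic_id_deform_K: "homotopic_with (\<lambda>_. True) (geom K) (geom K) id deform_K"
proof (rule homotopic_with_geom_straight_line)
  fix f assume "f \<in> realization K"
  then show "\<exists>\<sigma>\<in>K. finite \<sigma> \<and> id f \<in> geom_simplex \<sigma> \<and> deform_K f \<in> geom_simplex \<sigma>"
  proof (cases rule: realization_K_cases)
    case (off_N \<sigma>)
    then show ?thesis using deform_K_off_N finite_K_face by auto
  next
    case (star v \<tau>)
    have fin: "finite (insert v \<tau>)" using finite_L_face[OF star(2)] by simp
    have "deform_K f \<in> geom_simplex (insert v \<tau>)"
    proof (cases "f v \<le> 1/2")
      case True
      then show ?thesis using deform_K_low[OF star] geom_simplex_mono fin by blast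
    qed (use deform_K_high[OF star] in simp)
    then show ?thesis using star fin insert_v_L_face_in_K[OF star(1,2)] by auto
  qed
qed (auto intro: continuous_on_id continuous_on_deform_K)

lemma homotopic_deform_K_from_to_wedge:
  "homotopic_with (\<lambda>_. True) (geom K) (geom K) deform_K (from_wedge \<circ> to_wedge)"
proof (rule homotopic_with_geom_straight_line)
  fix f assume "f \<in> realization K"
  then show "\<exists>\<sigma>\<in>K. finite \<sigma> \<and> deform_K f \<in> geom_simplex \<sigma> \<and> (from_wedge \<circ> to_wedge) f \<in> geom_simplex \<sigma>"
  proof (cases rule: realization_K_cases)
    case (off_N \<sigma>)
    have fin: "finite (insert u \<sigma>)" using finite_K_face[OF off_N(1)] by simp
    have "deform_K f \<in> geom_simplex (insert u \<sigma>)"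
      using deform_K_off_N[OF off_N(2,3)] off_N(3) geom_simplex_mono fin by (metis subset_insertI)
    moreover have "(from_wedge \<circ> to_wedge) f \<in> geom_simplex (insert u \<sigma>)"
      using from_wedge_base[OF to_wedge_off_N[OF off_N(2,3)]] geom_simplex_mono fin by fastforce
    ultimately show ?thesis using insert_u_in_K[OF off_N(1,2)] fin by blast
  next
    case (star v \<tau>)
    have fin: "finite (insert v \<tau>)" "finite (insert u \<tau>)" using finite_L_face[OF star(2)] by auto
    show ?thesis
    proof (cases "f v \<le> 1/2")
      case True
      have "deform_K f \<in> geom_simplex (insert u \<tau>)"
        using deform_K_low[OF star True] geom_simplex_mono fin by (metis subset_insertI)
      moreover have "(from_wedge \<circ> to_wedge) f \<in> geom_simplex (insert u \<tau>)"
        using from_wedge_north[OF star(1,2) to_wedge_north[OF star True]] by simp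
      ultimately show ?thesis using insert_u_L_face_in_K[OF star(1,2)] fin by blast
    next
      case False
      then have high: "1/2 \<le> f v" by simp
      have "(from_wedge \<circ> to_wedge) f \<in> geom_simplex (insert v \<tau>)"
        using from_wedge_south[OF star(1,2) to_wedge_south[OF star high]] by simp
      then show ?thesis using deform_K_high[OF star high] insert_v_L_face_in_K[OF star(1,2)] fin by blast
    qed
  qed
qed (use continuous_on_deform_K continuous_on_compose[OF continuous_on_to_wedge continuous_on_from_wedge]
  in \<open>simp_all add: o_def\<close>)

lemma homotopic_id_deform_W: "homotopic_with (\<lambda>_. True) (geom W) (geom W) id deform_W"
proof (rule homotopic_with_geom_straight_line)
  fix p assume "p \<in> realization W"
  then show "\<exists>\<sigma>\<in>W. finite \<sigma> \<and> id p \<in> geom_simplex \<sigma> \<and> deform_W p \<in> geom_simplex \<sigma>"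
  proof (cases rule: realization_W_cases)
    case base
    then show ?thesis using deform_W_base[OF base] by (intro bexI[OF _ base_in_W]) simp
  next
    case (north v \<tau>)
    then show ?thesis using deform_W_north[OF north(3)] finite_L_face[OF north(2)]
      by (intro bexI[OF _ north_face_in_W]) simp_all
  next
    case (south v \<tau>)
    have fin: "finite (south_face v \<tau>)" using finite_L_face[OF south(2)] by simp
    have "deform_W p \<in> geom_simplex (south_face v \<tau>)"
    proof (cases "p (Some (v, Inr False)) \<le> 1/2")
      case True
      then show ?thesis
        using geom_simplex_mono[OF deform_W_south_low[OF south] equator_subset(2) fin] by blast
    qed (use deform_W_south_high[OF south] in simp)
    then show ?thesis using south(3) fin by (intro bexI[OF _ south_face_in_W[OF south(1,2)]]) simp
  qed
qed (auto intro: continuous_on_id continuous_on_deform_W)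

lemma to_wedge_from_wedge_north:
  assumes "v \<in> N" "\<tau> \<in> L v" "p \<in> geom_simplex (north_face v \<tau>)"
  shows "to_wedge (from_wedge p) \<in> geom_simplex (north_face v \<tau>)"
proof -
  have "insert u \<tau> \<inter> N = {}" using u_notin_N L_face_Int_N[OF assms(2)] by auto
  then have "to_wedge (from_wedge p) \<in> geom_simplex {None}"
    using to_wedge_off_N[OF _ from_wedge_north[OF assms]] by simp
  then show ?thesis
    by (rule geom_simplex_mono) (use finite_L_face[OF assms(2)] in \<open>auto simp: north_face_def\<close>)
qed

lemma homotopic_deform_W_to_from_wedge:
  "homotopic_with (\<lambda>_. True) (geom W) (geom W) deform_W (to_wedge \<circ> from_wedge)"
proof (rule homotopic_with_geom_straight_line)
  fix p assume "p \<in> realization W"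
  then show "\<exists>\<sigma>\<in>W. finite \<sigma> \<and> deform_W p \<in> geom_simplex \<sigma> \<and> (to_wedge \<circ> from_wedge) p \<in> geom_simplex \<sigma>"
  proof (cases rule: realization_W_cases)
    case base
    have "(to_wedge \<circ> from_wedge) p \<in> geom_simplex {None}"
      using to_wedge_off_N[OF _ from_wedge_base[OF base]] u_notin_N by simp
    then show ?thesis using deform_W_base[OF base] base by (intro bexI[OF _ base_in_W]) simp
  next
    case (north v \<tau>)
    then show ?thesis
      using deform_W_north[OF north(3)] to_wedge_from_wedge_north[OF north] finite_L_face[OF north(2)]
      by (intro bexI[OF _ north_face_in_W[OF north(1,2)]]) simp
  next
    case (south v \<tau>)
    have fin: "finite (south_face v \<tau>)" "finite (north_face v \<tau>)" using finite_L_face[OF south(2)] by auto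
    have pv: "from_wedge p v = p (Some (v, Inr False))"
      using south u_notin_N v_notin_L_face[OF south(1,2)] by (auto simp: from_wedge_star_face)
    note from_south = from_wedge_south[OF south]
    show ?thesis
    proof (cases "p (Some (v, Inr False)) \<le> 1/2")
      case True
      have "deform_W p \<in> geom_simplex (north_face v \<tau>)"
        using geom_simplex_mono[OF deform_W_south_low[OF south True] equator_subset(1) fin(2)] .
      moreover have "(to_wedge \<circ> from_wedge) p \<in> geom_simplex (north_face v \<tau>)"
        using to_wedge_north[OF south(1,2) from_south] pv True by simp
      ultimately show ?thesis using fin by (intro bexI[OF _ north_face_in_W[OF south(1,2)]]) simp
    next
      case False
      then have high: "1/2 \<le> p (Some (v, Inr False))" by simp
      have "(to_wedge \<circ> from_wedge) p \<in> geom_simplex (south_face v \<tau>)"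
        using to_wedge_south[OF south(1,2) from_south] pv high by simp
      then show ?thesis using deform_W_south_high[OF south high] fin
        by (intro bexI[OF _ south_face_in_W[OF south(1,2)]]) simp
    qed
  qed
qed (use continuous_on_deform_W continuous_on_compose[OF continuous_on_from_wedge continuous_on_to_wedge]
  in \<open>simp_all add: o_def\<close>)

theorem homotopy_equivalent_wedge: "geom K homotopy_equivalent_space geom W"
  unfolding homotopy_equivalent_space_def
proof (intro exI conjI)
  show "continuous_map (geom K) (geom W) to_wedge"
    by (simp add: geom_def continuous_on_to_wedge to_wedge_in_realization Pi_iff)
  show "continuous_map (geom W) (geom K) from_wedge"
    by (simp add: geom_def continuous_on_from_wedge from_wedge_in_realization Pi_iff)
  show "homotopic_with (\<lambda>_. True) (geom K) (geom K) (from_wedge \<circ> to_wedge) id"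
    using homotopic_with_trans[OF homotopic_id_deform_K homotopic_deform_K_from_to_wedge]
    by (simp add: homotopic_with_sym)
  show "homotopic_with (\<lambda>_. True) (geom W) (geom W) (to_wedge \<circ> from_wedge) id"
    using homotopic_with_trans[OF homotopic_id_deform_W homotopic_deform_W_to_from_wedge]
    by (simp add: homotopic_with_sym)
qed

section \<open>Generating faces\<close>

definition gen_faces :: "('a \<Rightarrow> 'a set set) \<Rightarrow> 'a set set" where
  "gen_faces GF = {{v} | v. v \<in> N \<and> H v = {}} \<union> {insert v \<sigma> | v \<sigma>. v \<in> N \<and> H v \<noteq> {} \<and> \<sigma> \<in> GF v}"

lemma gen_faces_Int_N: "\<sigma> \<in> gen_faces GF \<Longrightarrow> \<sigma> \<inter> N \<noteq> {}"
  by (auto simp: gen_faces_def)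

lemma insert_v_maximal_face:
  assumes v: "v \<in> N" and \<rho>: "\<rho> \<in> maximal_faces (L v)"
  shows "insert v \<rho> \<in> maximal_faces K"
proof -
  have \<rho>L: "\<rho> \<in> L v" using \<rho> by (simp add: maximal_faces_def)
  have "\<tau> = insert v \<rho>" if \<tau>: "\<tau> \<in> K" "insert v \<rho> \<subseteq> \<tau>" for \<tau>
    using \<tau>(1)
  proof (cases rule: K_face_cases)
    case off_N
    then show ?thesis using \<tau>(2) v by blast
  next
    case (star w \<rho>')
    have "w = v" using star \<tau>(2) v L_face_Int_N[OF star(2)] by blast
    moreover have "\<rho> \<subseteq> \<rho>'" using star \<tau>(2) L_face_Int_N[OF \<rho>L] v by blast
    moreover have "\<forall>\<tau>\<in>L v. \<rho> \<subseteq> \<tau> \<longrightarrow> \<tau> = \<rho>" using \<rho> by (simp add: maximal_faces_def)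
    ultimately have "\<rho>' = \<rho>" using star(2) by blast
    then show ?thesis using star(3) \<open>w = v\<close> by simp
  qed
  then show ?thesis using insert_v_L_face_in_K[OF v \<rho>L] unfolding maximal_faces_def by blast
qed

lemma gen_faces_subset_maximal_faces:
  assumes "\<And>v. v \<in> N \<Longrightarrow> H v \<noteq> {} \<Longrightarrow> GF v \<subseteq> maximal_faces (L v)"
  shows "gen_faces GF \<subseteq> maximal_faces K"
proof
  fix \<sigma> assume "\<sigma> \<in> gen_faces GF"
  then consider (single) v where "v \<in> N" "H v = {}" "\<sigma> = {v}"
    | (insert) v \<rho> where "v \<in> N" "H v \<noteq> {}" "\<rho> \<in> GF v" "\<sigma> = insert v \<rho>"
    unfolding gen_faces_def by blast
  then show "\<sigma> \<in> maximal_faces K"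
  proof cases
    case single
    then have "L v = {{}}" by (auto simp: Ind_def)
    then have "{} \<in> maximal_faces (L v)" unfolding maximal_faces_def by blast
    then show ?thesis using insert_v_maximal_face[OF single(1)] single(3) by simp
  next
    case insert
    then show ?thesis using assms insert_v_maximal_face by blast
  qed
qed

text \<open>Radial projection of the simplex \<open>{v} \<union> \<tau>\<close> from the vertex \<open>v\<close> onto \<open>\<tau>\<close>.\<close>
definition drop_N :: "('a \<Rightarrow> real) \<Rightarrow> 'a \<Rightarrow> real" where
  "drop_N f y = (if y \<in> N then 0 else f y / (1 - N_weight f))"

lemma continuous_on_drop_N: "continuous_on {f. N_weight f < 1} drop_N"
proof (intro continuous_on_coordinatewise_then_product)
  fix y
  show "continuous_on {f. N_weight f < 1} (\<lambda>f. drop_N f y)"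
    unfolding drop_N_def N_weight_def by (cases "y \<in> N") (auto intro!: continuous_intros)
qed

lemma drop_N_eq_self: "(\<And>w. w \<in> N \<Longrightarrow> f w = 0) \<Longrightarrow> drop_N f = f"
  by (auto simp: drop_N_def N_weight_def)

lemma drop_N_star_pt:
  assumes v: "v \<in> N" and \<tau>: "\<tau> \<in> L v" and f: "f \<in> geom_simplex (insert v \<tau>)" and "f v < 1"
  shows "drop_N f \<in> geom_simplex \<tau>"
proof (rule geom_simplexI)
  show "0 \<le> drop_N f y" for y using geom_simplexD(1)[OF f] assms(4) star_pt_N_weight[OF v \<tau> f]
    by (simp add: drop_N_def)
  show "drop_N f y = 0" if "y \<notin> \<tau>" for y
    using that geom_simplexD(2)[OF f, of y] v by (auto simp: drop_N_def)
  have "sum (drop_N f) \<tau> = (\<Sum>y\<in>\<tau>. f y / (1 - f v))"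
    using L_face_Int_N[OF \<tau>] star_pt_N_weight[OF v \<tau> f] by (intro sum.cong) (auto simp: drop_N_def)
  also have "\<dots> = 1"
    using star_pt_sum_L[OF v \<tau> f] assms(4) by (simp add: sum_divide_distrib[symmetric])
  finally show "sum (drop_N f) \<tau> = 1" .
qed

text \<open>A point of \<open>K\<close> has at most one nonzero coordinate in \<open>N\<close>; \<open>glue F\<close> applies \<open>F v\<close>
  where that coordinate is \<open>v\<close>.\<close>
definition glue :: "('a \<Rightarrow> ('a \<Rightarrow> real) \<Rightarrow> 'a \<Rightarrow> real) \<Rightarrow> ('a \<Rightarrow> real) \<Rightarrow> 'a \<Rightarrow> real" where
  "glue F f = (if \<forall>w\<in>N. f w = 0 then f else F (SOME v. v \<in> N \<and> f v \<noteq> 0) f)"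

lemma glue_off_N: "(\<And>w. w \<in> N \<Longrightarrow> f w = 0) \<Longrightarrow> glue F f = f"
  by (simp add: glue_def)

lemma glue_at:
  assumes "v \<in> N" "\<And>w. w \<in> N \<Longrightarrow> w \<noteq> v \<Longrightarrow> f w = 0" "f v = 0 \<Longrightarrow> F v f = f"
  shows "glue F f = F v f"
proof (cases "f v = 0")
  case False
  then have "(SOME v. v \<in> N \<and> f v \<noteq> 0) = v"
    using assms(1,2) by (intro some_equality) auto
  then show ?thesis using False assms(1) by (auto simp: glue_def)
next
  case True
  then show ?thesis using assms by (metis glue_off_N)
qed

end

locale simplicial_vertex_contractions = simplicial_vertex V E u
  for V :: "'a set" and E u +
  fixes GF :: "'a \<Rightarrow> 'a set set"
    and contr :: "'a \<Rightarrow> real \<times> ('a \<Rightarrow> real) \<Rightarrow> 'a \<Rightarrow> real" and centre :: "'a \<Rightarrow> 'a \<Rightarrow> real"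
  assumes GF_subset_L: "\<And>v. v \<in> nbhd V E u \<Longrightarrow> V - (nbhd V E u \<union> nbhd V E v) \<noteq> {} \<Longrightarrow>
      GF v \<subseteq> Ind (V - (nbhd V E u \<union> nbhd V E v)) E"
    and contraction: "\<And>v. v \<in> nbhd V E u \<Longrightarrow> V - (nbhd V E u \<union> nbhd V E v) \<noteq> {} \<Longrightarrow>
      is_contraction (Ind (V - (nbhd V E u \<union> nbhd V E v)) E - GF v) (contr v) (centre v)"
begin

abbreviation "K' \<equiv> K - gen_faces GF"

definition L' :: "'a \<Rightarrow> 'a set set" where
  "L' v = {\<tau> \<in> L v. insert v \<tau> \<notin> gen_faces GF}"

lemma L'_subset_L: "L' v \<subseteq> L v"
  by (auto simp: L'_def)

lemma off_N_face_in_K': "\<sigma> \<in> K \<Longrightarrow> \<sigma> \<inter> N = {} \<Longrightarrow> \<sigma> \<in> K'"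
  using gen_faces_Int_N by blast

lemma insert_v_L'_face_in_K': "v \<in> N \<Longrightarrow> \<tau> \<in> L' v \<Longrightarrow> insert v \<tau> \<in> K'"
  using insert_v_L_face_in_K by (auto simp: L'_def)

lemma insert_u_L'_face_in_K': "v \<in> N \<Longrightarrow> \<tau> \<in> L' v \<Longrightarrow> insert u \<tau> \<in> K'"
  using insert_u_L_face_in_K L_face_Int_N u_notin_N L'_subset_L
  by (intro off_N_face_in_K') blast+

lemma K'_face_cases:
  assumes "\<sigma> \<in> K'"
  obtains (off_N) "\<sigma> \<inter> N = {}" | (star) v \<tau> where "v \<in> N" "\<tau> \<in> L' v" "\<sigma> = insert v \<tau>"
proof -
  from assms have "\<sigma> \<in> K" by blast
  then show ?thesis
  proof (cases rule: K_face_cases)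
    case (star v \<tau>)
    then show ?thesis using that(2)[of v \<tau>] assms by (auto simp: L'_def)
  qed (use that(1) in blast)
qed

lemma L'_nonempty_imp:
  assumes v: "v \<in> N" and "L' v \<noteq> {}"
  shows "H v \<noteq> {}" "L' v = L v - GF v"
proof -
  show hv: "H v \<noteq> {}"
  proof
    assume "H v = {}"
    then have "L v = {{}}" "{v} \<in> gen_faces GF" using v unfolding Ind_def gen_faces_def by blast+
    then show False using assms(2) by (auto simp: L'_def)
  qed
  have "insert v \<tau> \<in> gen_faces GF \<longleftrightarrow> \<tau> \<in> GF v" if \<tau>: "\<tau> \<in> L v" for \<tau>
  proof
    assume "insert v \<tau> \<in> gen_faces GF"
    then obtain w \<sigma> where w: "insert v \<tau> = insert w \<sigma>" "w \<in> N" "H w \<noteq> {}" "\<sigma> \<in> GF w"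
      using hv by (auto simp: gen_faces_def)
    then have "\<sigma> \<in> L w" using GF_subset_L by blast
    then have "w = v" "v \<notin> \<sigma>"
      using w(1,2) v L_face_Int_N[OF \<tau>] L_face_Int_N[of \<sigma> w] by blast+
    then show "\<tau> \<in> GF v" using w v_notin_L_face[OF v \<tau>] by (metis insert_ident)
  qed (use v hv in \<open>auto simp: gen_faces_def\<close>)
  then show "L' v = L v - GF v" by (auto simp: L'_def)
qed

lemma contraction_L':
  assumes v: "v \<in> N" and "\<tau> \<in> L' v"
  shows "is_contraction (L' v) (contr v) (centre v)"
proof -
  have "L' v \<noteq> {}" using assms(2) by blast
  then show ?thesis using contraction[OF v L'_nonempty_imp(1)[OF v]] L'_nonempty_imp(2)[OF v] by simp
qed

definition off_N_part :: "('a \<Rightarrow> real) set" where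
  "off_N_part = (\<Union>\<sigma>\<in>{\<sigma>\<in>K. \<sigma> \<inter> N = {}}. geom_simplex \<sigma>)"

definition star_part :: "'a \<Rightarrow> ('a \<Rightarrow> real) set" where
  "star_part v = (\<Union>\<tau>\<in>L' v. geom_simplex (insert v \<tau>))"

lemma closed_off_N_part: "closed off_N_part"
proof -
  have "finite {\<sigma>\<in>K. \<sigma> \<inter> N = {}}" using finite_Ind[OF finite_V] by simp
  then show ?thesis
    unfolding off_N_part_def by (intro closed_UN) (auto intro: closed_geom_simplex finite_K_face)
qed

lemma closed_star_part: "closed (star_part v)"
proof -
  have "finite (L v)" using finite_V by (intro finite_Ind) simp
  then have "finite (L' v)" using L'_subset_L finite_subset by blast
  then show ?thesis
    unfolding star_part_def using L'_subset_L finite_L_face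
    by (intro closed_UN) (auto intro!: closed_geom_simplex)
qed

lemma off_N_part_N: "f \<in> off_N_part \<Longrightarrow> w \<in> N \<Longrightarrow> f w = 0"
  by (auto simp: off_N_part_def dest: geom_simplexD(2))

lemma star_partE:
  assumes "f \<in> star_part v"
  obtains \<tau> where "\<tau> \<in> L' v" "\<tau> \<in> L v" "f \<in> geom_simplex (insert v \<tau>)"
  using assms L'_subset_L by (auto simp: star_part_def)

lemma realization_K'_eq: "realization K' = off_N_part \<union> (\<Union>v\<in>N. star_part v)"
proof (intro set_eqI iffI)
  fix f assume "f \<in> realization K'"
  then obtain \<sigma> where \<sigma>: "\<sigma> \<in> K'" "f \<in> geom_simplex \<sigma>" by (auto elim: realizationE)
  from \<sigma>(1) show "f \<in> off_N_part \<union> (\<Union>v\<in>N. star_part v)"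
    by (cases rule: K'_face_cases) (use \<sigma> in \<open>auto simp: off_N_part_def star_part_def\<close>)
next
  fix f assume "f \<in> off_N_part \<union> (\<Union>v\<in>N. star_part v)"
  then consider \<sigma> where "\<sigma> \<in> K" "\<sigma> \<inter> N = {}" "f \<in> geom_simplex \<sigma>"
    | v \<tau> where "v \<in> N" "\<tau> \<in> L' v" "f \<in> geom_simplex (insert v \<tau>)"
    unfolding off_N_part_def star_part_def by blast
  then show "f \<in> realization K'"
  proof cases
    case 1
    then show ?thesis using off_N_face_in_K' finite_K_face by (blast intro: realizationI)
  next
    case 2
    then have "finite (insert v \<tau>)" using finite_L_face L'_subset_L by blast
    then show ?thesis using 2 insert_v_L'_face_in_K' by (blast intro: realizationI)
  qed
qed

lemma realization_K'_cases:
  assumes "f \<in> realization K'"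
  obtains (off_N) \<sigma> where "\<sigma> \<in> K" "\<sigma> \<inter> N = {}" "f \<in> geom_simplex \<sigma>" "f \<in> off_N_part"
    | (star) v \<tau> where "v \<in> N" "\<tau> \<in> L' v" "\<tau> \<in> L v" "f \<in> geom_simplex (insert v \<tau>)" "f \<in> star_part v"
proof -
  from assms consider "f \<in> off_N_part" | v where "v \<in> N" "f \<in> star_part v"
    unfolding realization_K'_eq by blast
  then show ?thesis
  proof cases
    case 1
    then show ?thesis using that(1) by (auto simp: off_N_part_def)
  next
    case 2
    then show ?thesis using that(2) by (auto elim: star_partE)
  qed
qed

lemma N_weight_star_part: "v \<in> N \<Longrightarrow> f \<in> star_part v \<Longrightarrow> N_weight f = f v"
  by (erule star_partE) (rule star_pt_N_weight)

lemma drop_N_in_realization: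
  assumes v: "v \<in> N" and f: "f \<in> star_part v" and low: "f v \<le> 1/2"
  shows "drop_N f \<in> realization (L' v)"
proof -
  obtain \<tau> where \<tau>: "\<tau> \<in> L' v" "\<tau> \<in> L v" "f \<in> geom_simplex (insert v \<tau>)"
    using f by (rule star_partE)
  show ?thesis
    using \<tau>(1) finite_L_face[OF \<tau>(2)] drop_N_star_pt[OF v \<tau>(2,3)] low by (intro realizationI) auto
qed

lemma contr_drop_N_in_realization:
  assumes v: "v \<in> N" and f: "f \<in> star_part v" and low: "f v \<le> 1/2" and r: "r \<in> {0..1}"
  shows "contr v (r, drop_N f) \<in> realization (L' v)"
proof -
  obtain \<tau> where "\<tau> \<in> L' v" using f by (rule star_partE)
  then have "contr v ` ({0..1} \<times> realization (L' v)) \<subseteq> realization (L' v)"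
    using contraction_L'[OF v] by (simp add: is_contraction_def)
  then show ?thesis using drop_N_in_realization[OF v f low] r by blast
qed

lemma continuous_on_contr_drop_N:
  fixes r :: "'b::topological_space \<Rightarrow> real"
  assumes v: "v \<in> N" and "continuous_on S r" "continuous_on S g"
    and S: "\<And>x. x \<in> S \<Longrightarrow> r x \<in> {0..1} \<and> g x \<in> star_part v \<and> g x v \<le> 1/2"
  shows "continuous_on S (\<lambda>x. contr v (r x, drop_N (g x)))"
proof (cases "S = {}")
  case False
  then obtain x where "x \<in> S" by blast
  then obtain \<tau> where \<tau>: "\<tau> \<in> L' v" using S by (blast elim: star_partE)
  have "g ` S \<subseteq> {f. N_weight f < 1}" using S N_weight_star_part[OF v] by fastforce
  then have "continuous_on S (\<lambda>x. drop_N (g x))"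
    by (rule continuous_on_compose2[OF continuous_on_drop_N assms(3)])
  then have "continuous_on S (\<lambda>x. (r x, drop_N (g x)))"
    by (intro continuous_on_Pair assms(2))
  moreover have "(\<lambda>x. (r x, drop_N (g x))) ` S \<subseteq> {0..1} \<times> realization (L' v)"
    using S drop_N_in_realization[OF v] by blast
  moreover have "continuous_on ({0..1} \<times> realization (L' v)) (contr v)"
    using contraction_L'[OF v \<tau>] by (simp add: is_contraction_def)
  ultimately show ?thesis by (rule continuous_on_compose2[rotated])
qed simp

text \<open>At stage \<open>s\<close>, a point of the star of \<open>v\<close> with weight \<open>t \<le> 1/2\<close> at \<open>v\<close> gets weight \<open>2t\<close>
  at \<open>v\<close>, while its projection to the link is moved along the contraction of \<open>L' v\<close> for time
  \<open>2ts\<close>.  For \<open>t = 1/2\<close> this is the vertex \<open>v\<close>, and for \<open>t = 0\<close> nothing moves, so these maps glue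
  with the identity on the faces missing \<open>N\<close>.\<close>
definition star_deform :: "'a \<Rightarrow> real \<Rightarrow> ('a \<Rightarrow> real) \<Rightarrow> 'a \<Rightarrow> real" where
  "star_deform v s f = (if f v \<le> 1/2
     then (\<lambda>y. 2 * f v * indicator {v} y + (1 - 2 * f v) * contr v (2 * f v * s, drop_N f) y)
     else indicator {v})"

definition star_retract :: "'a \<Rightarrow> ('a \<Rightarrow> real) \<Rightarrow> 'a \<Rightarrow> real" where
  "star_retract v f = (if f v \<le> 1/2 then contr v (2 * f v, drop_N f) else centre v)"

context
  fixes v f assumes v: "v \<in> N" and f: "f \<in> star_part v"
begin

lemma star_deform_fixes: "f v = 0 \<Longrightarrow> star_deform v s f = f"
  and star_retract_fixes: "f v = 0 \<Longrightarrow> star_retract v f = f"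
proof -
  assume "f v = 0"
  moreover obtain \<tau> where "\<tau> \<in> L v" "f \<in> geom_simplex (insert v \<tau>)" using f by (rule star_partE)
  ultimately have "drop_N f = f" using star_pt_N[OF v] by (metis drop_N_eq_self)
  moreover obtain \<tau> where "\<tau> \<in> L' v" using f by (rule star_partE)
  then have "contr v (0, x) = x" for x using contraction_L'[OF v] by (simp add: is_contraction_def)
  ultimately show "star_deform v s f = f" "star_retract v f = f"
    using \<open>f v = 0\<close> by (simp_all add: star_deform_def star_retract_def)
qed

lemma star_deform_in_star:
  assumes s: "s \<in> {0..1}"
  shows "\<exists>\<rho>\<in>L' v. star_deform v s f \<in> geom_simplex (insert v \<rho>)"
proof (cases "f v \<le> 1/2")
  case True
  have "0 \<le> f v" using f by (auto elim: star_partE dest: geom_simplexD(1))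
  then have "2 * f v * s \<in> {0..1}" using s True mult_left_le[of s "2 * f v"] by auto
  from contr_drop_N_in_realization[OF v f True this]
  obtain \<rho> where \<rho>: "\<rho> \<in> L' v" "contr v (2 * f v * s, drop_N f) \<in> geom_simplex \<rho>"
    by (elim realizationE) blast
  then have \<rho>L: "\<rho> \<in> L v" using L'_subset_L by blast
  have "star_deform v s f \<in> geom_simplex (insert v \<rho>)"
    using True \<open>0 \<le> f v\<close> \<rho>(2) v_notin_L_face[OF v \<rho>L] finite_L_face[OF \<rho>L]
    by (auto simp: star_deform_def intro!: convex_comb_vertex_in_geom_simplex)
  then show ?thesis using \<rho>(1) by blast
next
  case False
  obtain \<tau> where "\<tau> \<in> L' v" "\<tau> \<in> L v" using f by (rule star_partE)
  then show ?thesis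
    using False finite_L_face by (auto simp: star_deform_def intro!: indicator_in_geom_simplex)
qed

lemma star_deform_start:
  assumes \<tau>: "\<tau> \<in> L' v" "\<tau> \<in> L v" and f': "f \<in> geom_simplex (insert v \<tau>)"
  shows "star_deform v 0 f \<in> geom_simplex (insert v \<tau>)"
proof (cases "f v \<le> 1/2")
  case True
  have "contr v (0, x) = x" for x using contraction_L'[OF v \<tau>(1)] by (simp add: is_contraction_def)
  then show ?thesis
    using True drop_N_star_pt[OF v \<tau>(2) f'] geom_simplexD(1)[OF f'] v_notin_L_face[OF v \<tau>(2)]
      finite_L_face[OF \<tau>(2)]
    by (auto simp: star_deform_def intro!: convex_comb_vertex_in_geom_simplex)
qed (use finite_L_face[OF \<tau>(2)] in \<open>auto simp: star_deform_def intro!: indicator_in_geom_simplex\<close>)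

lemma star_retract_in_link:
  "\<exists>\<rho>\<in>L' v. star_retract v f \<in> geom_simplex \<rho> \<and> star_deform v 1 f \<in> geom_simplex (insert v \<rho>)"
proof -
  obtain \<tau> where \<tau>: "\<tau> \<in> L' v" using f by (rule star_partE)
  have "star_retract v f \<in> realization (L' v)"
  proof (cases "f v \<le> 1/2")
    case True
    have "0 \<le> f v" using f by (auto elim: star_partE dest: geom_simplexD(1))
    then show ?thesis
      using contr_drop_N_in_realization[OF v f True] True by (simp add: star_retract_def)
  qed (use contraction_L'[OF v \<tau>] in \<open>simp add: star_retract_def is_contraction_def\<close>)
  then obtain \<rho> where \<rho>: "\<rho> \<in> L' v" "star_retract v f \<in> geom_simplex \<rho>"
    by (elim realizationE) blast
  then have \<rho>L: "\<rho> \<in> L v" using L'_subset_L by blast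
  have "star_deform v 1 f = (\<lambda>y. min 1 (2 * f v) * indicator {v} y + (1 - min 1 (2 * f v)) * star_retract v f y)"
    by (auto simp: star_deform_def star_retract_def fun_eq_iff)
  also have "\<dots> \<in> geom_simplex (insert v \<rho>)"
    using \<rho>(2) v_notin_L_face[OF v \<rho>L] finite_L_face[OF \<rho>L] f
    by (intro convex_comb_vertex_in_geom_simplex) (auto elim: star_partE dest: geom_simplexD(1))
  finally show ?thesis using \<rho> by blast
qed

end

lemma continuous_on_star_deform:
  assumes v: "v \<in> N"
  shows "continuous_on ({0..1} \<times> star_part v) (\<lambda>p. star_deform v (fst p) (snd p))"
proof -
  let ?D = "{0..1::real} \<times> star_part v"
  let ?P = "{p \<in> ?D. snd p v \<le> 1/2}"
  let ?c = "\<lambda>p. contr v (2 * snd p v * fst p, drop_N (snd p))"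
  have snd_v: "continuous_on S (\<lambda>p. snd p v)" for S :: "(real \<times> ('a \<Rightarrow> real)) set"
    using continuous_on_product_then_coordinatewise[OF continuous_on_snd[OF continuous_on_id]] .
  have "continuous_on ?P ?c"
  proof (rule continuous_on_contr_drop_N[OF v])
    show "continuous_on ?P (\<lambda>p. 2 * snd p v * fst p)"
      by (intro continuous_on_mult continuous_on_const snd_v continuous_on_fst continuous_on_id)
    show "continuous_on ?P snd" by (rule continuous_on_snd[OF continuous_on_id])
    fix p assume "p \<in> ?P"
    moreover have "0 \<le> snd p v" if "snd p \<in> star_part v"
      using that by (auto elim: star_partE dest: geom_simplexD(1))
    ultimately show "2 * snd p v * fst p \<in> {0..1} \<and> snd p \<in> star_part v \<and> snd p v \<le> 1/2"
      using mult_left_le[of "fst p" "2 * snd p v"] by auto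
  qed
  then have "continuous_on ?P (\<lambda>p. ?c p y)" for y
    by (rule continuous_on_product_then_coordinatewise)
  then have "continuous_on ?P (\<lambda>p y. 2 * snd p v * indicator {v} y + (1 - 2 * snd p v) * ?c p y)"
    by (intro continuous_on_coordinatewise_then_product continuous_intros snd_v)
  then have "continuous_on ?D (\<lambda>p. if snd p v \<le> 1/2
      then (\<lambda>y. 2 * snd p v * indicator {v} y + (1 - 2 * snd p v) * ?c p y) else indicator {v})"
    by (rule continuous_on_cases_le) (auto intro: snd_v simp: mult.commute)
  then show ?thesis by (rule continuous_on_eq) (simp add: star_deform_def)
qed

lemma continuous_on_star_retract:
  assumes v: "v \<in> N"
  shows "continuous_on (star_part v) (star_retract v)"
proof (cases "star_part v = {}")
  case False
  then obtain \<tau> where \<tau>: "\<tau> \<in> L' v" by (blast elim: star_partE)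
  have "continuous_on {f \<in> star_part v. f v \<le> 1/2} (\<lambda>f. contr v (2 * f v, drop_N f))"
  proof (rule continuous_on_contr_drop_N[OF v])
    fix f assume "f \<in> {f \<in> star_part v. f v \<le> 1/2}"
    moreover have "0 \<le> f v" if "f \<in> star_part v"
      using that by (auto elim: star_partE dest: geom_simplexD(1))
    ultimately show "2 * f v \<in> {0..1} \<and> f \<in> star_part v \<and> f v \<le> 1/2" by auto
  qed (intro continuous_intros)+
  moreover have "contr v (2 * f v, drop_N f) = centre v" if "f v = 1/2" for f
  proof -
    have "2 * f v = 1" using that by simp
    then show ?thesis using contraction_L'[OF v \<tau>] by (simp add: is_contraction_def)
  qed
  ultimately have
    "continuous_on (star_part v) (\<lambda>f. if f v \<le> 1/2 then contr v (2 * f v, drop_N f) else centre v)"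
    by (intro continuous_on_cases_le) (auto intro: continuous_intros)
  then show ?thesis by (rule continuous_on_eq) (simp add: star_retract_def)
qed simp

lemma glue_star_part:
  assumes v: "v \<in> N" and f: "f \<in> star_part v" and G: "f v = 0 \<Longrightarrow> G v f = f"
  shows "glue G f = G v f"
proof -
  obtain \<tau> where "\<tau> \<in> L v" "f \<in> geom_simplex (insert v \<tau>)" using f by (rule star_partE)
  then have "f w = 0" if "w \<in> N" "w \<noteq> v" for w using star_pt_N[OF v] that by blast
  then show ?thesis using v G by (intro glue_at[where F = G]) blast+
qed

lemma continuous_on_glue:
  fixes F :: "'b::topological_space \<Rightarrow> 'a \<Rightarrow> ('a \<Rightarrow> real) \<Rightarrow> 'a \<Rightarrow> real"
  assumes T: "closed T"
    and cont: "\<And>v. v \<in> N \<Longrightarrow> continuous_on (T \<times> star_part v) (\<lambda>p. F (fst p) v (snd p))"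
    and F_fixes: "\<And>s v f. v \<in> N \<Longrightarrow> f \<in> star_part v \<Longrightarrow> f v = 0 \<Longrightarrow> F s v f = f"
  shows "continuous_on (T \<times> realization K') (\<lambda>p. glue (F (fst p)) (snd p))"
proof -
  let ?G = "\<lambda>p. glue (F (fst p)) (snd p)"
  have off: "continuous_on (T \<times> off_N_part) ?G"
    by (rule continuous_on_eq[OF continuous_on_snd[OF continuous_on_id]])
      (auto simp: glue_off_N off_N_part_N)
  have star: "continuous_on (\<Union>v\<in>N. T \<times> star_part v) ?G"
  proof (rule continuous_on_closed_Union[OF finite_N])
    show "closed (T \<times> star_part v)" for v using T closed_star_part by (rule closed_Times)
    show "continuous_on (T \<times> star_part v) ?G" if v: "v \<in> N" for v
    proof (rule continuous_on_eq[OF cont[OF v]])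
      fix p assume "p \<in> T \<times> star_part v"
      then show "F (fst p) v (snd p) = ?G p"
        using glue_star_part[OF v, of "snd p" "F (fst p)"] F_fixes[OF v] by auto
    qed
  qed
  have "closed (\<Union>v\<in>N. T \<times> star_part v)"
    using T closed_star_part finite_N by (intro closed_UN) (auto intro: closed_Times)
  moreover have "closed (T \<times> off_N_part)" using T closed_off_N_part by (rule closed_Times)
  moreover have "T \<times> realization K' = T \<times> off_N_part \<union> (\<Union>v\<in>N. T \<times> star_part v)"
    unfolding realization_K'_eq by auto
  ultimately show ?thesis using continuous_on_closed_Un[OF _ _ off star] by simp
qed

definition K'_homotopy :: "real \<times> ('a \<Rightarrow> real) \<Rightarrow> 'a \<Rightarrow> real" where
  "K'_homotopy p = glue (\<lambda>v. star_deform v (fst p)) (snd p)"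

definition K'_retraction :: "('a \<Rightarrow> real) \<Rightarrow> 'a \<Rightarrow> real" where
  "K'_retraction = glue star_retract"

lemma K'_homotopy_off_N: "f \<in> off_N_part \<Longrightarrow> K'_homotopy (s, f) = f"
  and K'_retraction_off_N: "f \<in> off_N_part \<Longrightarrow> K'_retraction f = f"
  by (simp_all add: K'_homotopy_def K'_retraction_def glue_off_N off_N_part_N)

lemma K'_homotopy_star: "v \<in> N \<Longrightarrow> f \<in> star_part v \<Longrightarrow> K'_homotopy (s, f) = star_deform v s f"
  and K'_retraction_star: "v \<in> N \<Longrightarrow> f \<in> star_part v \<Longrightarrow> K'_retraction f = star_retract v f"
  by (simp_all add: K'_homotopy_def K'_retraction_def glue_star_part star_deform_fixes
      star_retract_fixes)

lemma continuous_on_K'_homotopy: "continuous_on ({0..1} \<times> realization K') K'_homotopy"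
  unfolding K'_homotopy_def
  by (rule continuous_on_glue[where F = "\<lambda>s v. star_deform v s"])
    (auto intro: continuous_on_star_deform star_deform_fixes)

lemma continuous_on_K'_retraction: "continuous_on (realization K') K'_retraction"
proof -
  have "continuous_on ({0::real} \<times> realization K') (\<lambda>p. glue star_retract (snd p))"
  proof (rule continuous_on_glue[where F = "\<lambda>_. star_retract"])
    show "continuous_on ({0} \<times> star_part v) (\<lambda>p. star_retract v (snd p))" if "v \<in> N" for v
      by (rule continuous_on_compose2[OF continuous_on_star_retract[OF that]
          continuous_on_snd[OF continuous_on_id]]) auto
  qed (simp_all add: star_retract_fixes)
  then have "continuous_on (realization K') (\<lambda>f. glue star_retract (snd (0::real, f)))"
    by (rule continuous_on_compose2) (auto intro: continuous_intros)
  then show ?thesis by (simp add: K'_retraction_def)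
qed

lemma K'_homotopy_in_realization:
  assumes "s \<in> {0..1}" "f \<in> realization K'"
  shows "K'_homotopy (s, f) \<in> realization K'"
  using assms(2)
proof (cases rule: realization_K'_cases)
  case off_N
  then show ?thesis using assms(2) K'_homotopy_off_N by simp
next
  case (star v \<tau>)
  obtain \<rho> where \<rho>: "\<rho> \<in> L' v" "star_deform v s f \<in> geom_simplex (insert v \<rho>)"
    using star_deform_in_star[OF star(1,5) assms(1)] by blast
  then have "finite (insert v \<rho>)" using L'_subset_L finite_L_face by blast
  then show ?thesis
    using \<rho> K'_homotopy_star[OF star(1,5)] insert_v_L'_face_in_K'[OF star(1) \<rho>(1)]
    by (simp add: realizationI)
qed

lemma homotopic_id_K'_homotopy_start:
  "homotopic_with (\<lambda>_. True) (geom K') (geom K') id (\<lambda>f. K'_homotopy (0, f))"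
proof (rule homotopic_with_geom_straight_line)
  show "continuous_on (realization K') (\<lambda>f. K'_homotopy (0, f))"
    by (rule continuous_on_compose2[OF continuous_on_K'_homotopy]) (auto intro: continuous_intros)
  fix f assume "f \<in> realization K'"
  then show "\<exists>\<sigma>\<in>K'. finite \<sigma> \<and> id f \<in> geom_simplex \<sigma> \<and> K'_homotopy (0, f) \<in> geom_simplex \<sigma>"
  proof (cases rule: realization_K'_cases)
    case (off_N \<sigma>)
    then show ?thesis using K'_homotopy_off_N off_N_face_in_K' finite_K_face by auto
  next
    case (star v \<tau>)
    then show ?thesis
      using K'_homotopy_star[OF star(1,5)] star_deform_start[OF star(1,5,2,3,4)]
        insert_v_L'_face_in_K'[OF star(1,2)] finite_L_face[OF star(3)] by auto
  qed
qed (rule continuous_on_id')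

lemma homotopic_K'_homotopy_start_end:
  "homotopic_with (\<lambda>_. True) (geom K') (geom K') (\<lambda>f. K'_homotopy (0, f)) (\<lambda>f. K'_homotopy (1, f))"
  unfolding geom_def
  using continuous_on_K'_homotopy K'_homotopy_in_realization
  by (intro homotopic_with_top_of_setI) auto

lemma homotopic_K'_homotopy_end_retraction:
  "homotopic_with (\<lambda>_. True) (geom K') (geom K') (\<lambda>f. K'_homotopy (1, f)) K'_retraction"
proof (rule homotopic_with_geom_straight_line)
  show "continuous_on (realization K') (\<lambda>f. K'_homotopy (1, f))"
    by (rule continuous_on_compose2[OF continuous_on_K'_homotopy]) (auto intro: continuous_intros)
  fix f assume "f \<in> realization K'"
  then show "\<exists>\<sigma>\<in>K'. finite \<sigma> \<and> K'_homotopy (1, f) \<in> geom_simplex \<sigma> \<and> K'_retraction f \<in> geom_simplex \<sigma>"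
  proof (cases rule: realization_K'_cases)
    case (off_N \<sigma>)
    then show ?thesis using K'_homotopy_off_N K'_retraction_off_N off_N_face_in_K' finite_K_face by auto
  next
    case (star v \<tau>)
    obtain \<rho> where \<rho>: "\<rho> \<in> L' v" "star_retract v f \<in> geom_simplex \<rho>"
      "star_deform v 1 f \<in> geom_simplex (insert v \<rho>)"
      using star_retract_in_link[OF star(1,5)] by blast
    have fin: "finite (insert v \<rho>)" using \<rho>(1) L'_subset_L finite_L_face by blast
    then show ?thesis
      using \<rho> geom_simplex_mono[OF \<rho>(2) _ fin] insert_v_L'_face_in_K'[OF star(1) \<rho>(1)]
        K'_homotopy_star[OF star(1,5)] K'_retraction_star[OF star(1,5)] by auto
  qed
qed (rule continuous_on_K'_retraction)

lemma homotopic_K'_retraction_const: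
  "homotopic_with (\<lambda>_. True) (geom K') (geom K') K'_retraction (\<lambda>_. indicator {u})"
proof (rule homotopic_with_geom_straight_line)
  fix f assume "f \<in> realization K'"
  then show "\<exists>\<sigma>\<in>K'. finite \<sigma> \<and> K'_retraction f \<in> geom_simplex \<sigma> \<and> indicator {u} \<in> geom_simplex \<sigma>"
  proof (cases rule: realization_K'_cases)
    case (off_N \<sigma>)
    have fin: "finite (insert u \<sigma>)" using finite_K_face[OF off_N(1)] by simp
    have "insert u \<sigma> \<in> K'"
      using insert_u_in_K[OF off_N(1,2)] off_N(2) u_notin_N by (intro off_N_face_in_K') auto
    moreover have "K'_retraction f \<in> geom_simplex (insert u \<sigma>)"
      using K'_retraction_off_N[OF off_N(4)] geom_simplex_mono[OF off_N(3) _ fin] by auto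
    ultimately show ?thesis using fin indicator_in_geom_simplex[OF fin] by (intro bexI) auto
  next
    case (star v \<tau>)
    obtain \<rho> where \<rho>: "\<rho> \<in> L' v" "star_retract v f \<in> geom_simplex \<rho>"
      using star_retract_in_link[OF star(1,5)] by blast
    have fin: "finite (insert u \<rho>)" using \<rho>(1) L'_subset_L finite_L_face by blast
    have "K'_retraction f \<in> geom_simplex (insert u \<rho>)"
      using K'_retraction_star[OF star(1,5)] geom_simplex_mono[OF \<rho>(2) _ fin] by auto
    then show ?thesis using insert_u_L'_face_in_K'[OF star(1) \<rho>(1)] fin indicator_in_geom_simplex[OF fin]
      by (intro bexI) auto
  qed
qed (simp_all add: continuous_on_K'_retraction)

theorem contractible_K': "contractible_cx K'"
proof -
  have "homotopic_with (\<lambda>_. True) (geom K') (geom K') id (\<lambda>_. indicator {u})"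
    using homotopic_with_trans[OF homotopic_with_trans[OF homotopic_with_trans[OF
        homotopic_id_K'_homotopy_start homotopic_K'_homotopy_start_end]
        homotopic_K'_homotopy_end_retraction] homotopic_K'_retraction_const] .
  moreover have "indicator {u} \<in> realization K'"
    using off_N_face_in_K'[OF insert_u_in_K[of "{}"]] u_notin_N
    by (intro realizationI[of "{u}"] indicator_in_geom_simplex) (auto simp: Ind_def)
  ultimately show ?thesis
    unfolding contractible_cx_def contractible_space_def by blast
qed

end

context simplicial_vertex
begin

theorem generating_faces_Ind:
  assumes gen: "\<And>v. v \<in> N \<Longrightarrow> H v \<noteq> {} \<Longrightarrow> generating_faces (L v) (GF v)"
  shows "generating_faces K (gen_faces GF)"
proof -
  have "\<exists>hc. v \<in> N \<and> H v \<noteq> {} \<longrightarrow> is_contraction (L v - GF v) (fst hc) (snd hc)" for v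
  proof (cases "v \<in> N \<and> H v \<noteq> {}")
    case True
    then obtain h c where "is_contraction (L v - GF v) h c"
      using gen contractible_cx_imp_contraction unfolding generating_faces_def by blast
    then show ?thesis by (intro exI[of _ "(h, c)"]) simp
  qed blast
  then obtain hc where hc: "\<And>v. v \<in> N \<Longrightarrow> H v \<noteq> {} \<Longrightarrow> is_contraction (L v - GF v) (fst (hc v)) (snd (hc v))"
    by metis
  have max: "GF v \<subseteq> maximal_faces (L v)" if "v \<in> N" "H v \<noteq> {}" for v
    using gen[OF that] by (simp add: generating_faces_def)
  moreover have "maximal_faces (L v) \<subseteq> L v" for v unfolding maximal_faces_def by blast
  ultimately interpret simplicial_vertex_contractions V E u GF "\<lambda>v. fst (hc v)" "\<lambda>v. snd (hc v)"
    using hc by unfold_locales blast+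
  show ?thesis
    unfolding generating_faces_def using gen_faces_subset_maximal_faces[OF max] contractible_K' by blast
qed

end

theorem theorem3p7:
  fixes V :: "'a set" and E :: "'a \<Rightarrow> 'a \<Rightarrow> bool" and u :: 'a
    and GF :: "'a \<Rightarrow> 'a set set"
  assumes "finite V"
    and "\<And>x y. E x y \<Longrightarrow> E y x"
    and "\<And>x. \<not> E x x"
    and "u \<in> V"
    and "\<And>x y. x \<in> nbhd V E u \<Longrightarrow> y \<in> nbhd V E u \<Longrightarrow> x \<noteq> y \<Longrightarrow> E x y"
  shows "(geom (Ind V E)) homotopy_equivalent_space
           (geom (wedge_cx (nbhd V E u)
              (\<lambda>v. susp_cx (Ind (V - (nbhd V E u \<union> nbhd V E v)) E)) (\<lambda>v. Inr True)))
       \<and> ((\<forall>v\<in>nbhd V E u. V - (nbhd V E u \<union> nbhd V E v) \<noteq> {} \<longrightarrow>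
              generating_faces (Ind (V - (nbhd V E u \<union> nbhd V E v)) E) (GF v))
          \<longrightarrow> generating_faces (Ind V E)
               ({ {v} | v. v \<in> nbhd V E u \<and> V - (nbhd V E u \<union> nbhd V E v) = {}}
                \<union> {insert v \<sigma> | v \<sigma>. v \<in> nbhd V E u \<and> V - (nbhd V E u \<union> nbhd V E v) \<noteq> {}
                                     \<and> \<sigma> \<in> GF v}))"
proof -
  interpret simplicial_vertex V E u using assms by unfold_locales
  show ?thesis
    using homotopy_equivalent_wedge generating_faces_Ind[of GF] unfolding gen_faces_def by blast
qed

end
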